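(* Let $\zeta\in(0,\infty)$ and $(h,w)\in\boldsymbol\Sigma([0,\zeta])$. Let $$U_{h,w}=\Big\{s\in[0,\zeta]:\ h(s)>0\ \text{and}\ \forall\varepsilon\in(0,h(s)),\ \inf_{r\in[h(s)-\varepsilon,h(s)]}w_s(r)<\widehat w_s\Big\}.$$ Assume that $[0,\zeta]\setminus U_{h,w}$ is Lebesgue-negligible and that the tree $(T_h,d_h,r_h,\mu_h)$ coded by $h$ is a continuum real tree. Then the snake tree $(T_{h,w},d_{h,w},r_{h,w},\mu_{h,w})$ is a continuum real tree.
   Context: Snakes: $(h,w)\in\boldsymbol\Sigma([0,\zeta])$ means $h:[0,\zeta]\to[0,\infty)$ continuous with $h(0)=h(\zeta)=0$, $s\mapsto w_s$ continuous into continuous functions $[0,\infty)\to\mathbb R$ (local uniform topology), $w_s(r)=w_s(h(s))=:\widehat w_s$ for $r\ge h(s)$, and $w_{s_1}(r)=w_{s_2}(r)$ for $r\le m_h(s_1,s_2):=\min_{[s_1\wedge s_2,s_1\vee s_2]}h$. Tree coded by $h$: $d_h(s_1,s_2)=h(s_1)+h(s_2)-2m_h(s_1,s_2)$, $T_h=[0,\zeta]/\{d_h=0\}$, root the class of $0$, $\mu_h$ image of Lebesgue measure. Snake metric: $d_{h,w}(s_1,s_2)=\widehat w_{s_1}+\widehat w_{s_2}-2\min\big(\min_{[m_h(s_1,s_2),h(s_1)]}w_{s_1},\min_{[m_h(s_1,s_2),h(s_2)]}w_{s_2}\big)$; it is a continuous pseudo-metric, and $(T_{h,w},d_{h,w},r_{h,w},\mu_{h,w})$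 is the quotient $[0,\zeta]/\{d_{h,w}=0\}$ with induced metric, root the class of $0$ and image of Lebesgue measure. A continuum real tree is a compact real tree $(T,d,r,\nu)$ with $\nu$ a finite diffuse Borel measure of topological support $T$ such that $\nu$-almost every point is a leaf, i.e. a point $\sigma\neq r$ with $T\setminus\{\sigma\}$ connected. *)

theory Defs
  imports "HOL-Analysis.Analysis" "HOL-Probability.Probability"
begin

definition borel_of :: "'a topology \<Rightarrow> 'a measure" where
  "borel_of T = sigma (topspace T) {U. openin T U}"

definition geodesic :: "'a set \<Rightarrow> ('a \<Rightarrow> 'a \<Rightarrow> real) \<Rightarrow> 'a \<Rightarrow> 'a \<Rightarrow> (real \<Rightarrow> 'a) \<Rightarrow> bool" where
  "geodesic M d a b f \<longleftrightarrow> f ` {0..d a b} \<subseteq> M \<and> f 0 = a \<and> f (d a b) = b \<and>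
     (\<forall>s\<in>{0..d a b}. \<forall>t\<in>{0..d a b}. d (f s) (f t) = \<bar>s - t\<bar>)"

definition real_tree :: "'a set \<Rightarrow> ('a \<Rightarrow> 'a \<Rightarrow> real) \<Rightarrow> bool" where
  "real_tree M d \<longleftrightarrow> Metric_space M d \<and>
     (\<forall>a\<in>M. \<forall>b\<in>M.
        (\<exists>f. geodesic M d a b f) \<and>
        (\<forall>f g. geodesic M d a b f \<and> geodesic M d a b g \<longrightarrow> (\<forall>s\<in>{0..d a b}. f s = g s)) \<and>
        (\<forall>q f. continuous_map (top_of_set {0..1::real}) (Metric_space.mtopology M d) q \<and>
               inj_on q {0..1} \<and> q 0 = a \<and> q 1 = b \<and> geodesic M d a b f
               \<longrightarrow> q ` {0..1} = f ` {0..d a b}))"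

definition is_leaf :: "'a set \<Rightarrow> ('a \<Rightarrow> 'a \<Rightarrow> real) \<Rightarrow> 'a \<Rightarrow> 'a \<Rightarrow> bool" where
  "is_leaf M d r x \<longleftrightarrow> x \<in> M \<and> x \<noteq> r \<and> connectedin (Metric_space.mtopology M d) (M - {x})"

definition msupport :: "'a set \<Rightarrow> ('a \<Rightarrow> 'a \<Rightarrow> real) \<Rightarrow> 'a measure \<Rightarrow> 'a set" where
  "msupport M d \<nu> = {x\<in>M. \<forall>U. openin (Metric_space.mtopology M d) U \<and> x \<in> U \<longrightarrow> emeasure \<nu> U > 0}"

definition continuum_real_tree :: "'a set \<Rightarrow> ('a \<Rightarrow> 'a \<Rightarrow> real) \<Rightarrow> 'a \<Rightarrow> 'a measure \<Rightarrow> bool" where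
  "continuum_real_tree M d r \<nu> \<longleftrightarrow>
     real_tree M d \<and> compact_space (Metric_space.mtopology M d) \<and> r \<in> M \<and>
     space \<nu> = M \<and> sets \<nu> = sets (borel_of (Metric_space.mtopology M d)) \<and>
     finite_measure \<nu> \<and>
     (\<forall>x\<in>M. emeasure \<nu> {x} = 0) \<and>
     msupport M d \<nu> = M \<and>
     (AE x in \<nu>. is_leaf M d r x)"

definition qclass :: "real \<Rightarrow> (real \<Rightarrow> real \<Rightarrow> real) \<Rightarrow> real \<Rightarrow> real set" where
  "qclass \<zeta> dd s = {t\<in>{0..\<zeta>}. dd s t = 0}"

definition qspace :: "real \<Rightarrow> (real \<Rightarrow> real \<Rightarrow> real) \<Rightarrow> real set set" where
  "qspace \<zeta> dd = qclass \<zeta> dd ` {0..\<zeta>}"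

definition qdist :: "real \<Rightarrow> (real \<Rightarrow> real \<Rightarrow> real) \<Rightarrow> real set \<Rightarrow> real set \<Rightarrow> real" where
  "qdist \<zeta> dd A B = (if A \<in> qspace \<zeta> dd \<and> B \<in> qspace \<zeta> dd
      then dd (SOME s. s \<in> A) (SOME t. t \<in> B) else 0)"

definition qroot :: "real \<Rightarrow> (real \<Rightarrow> real \<Rightarrow> real) \<Rightarrow> real set" where
  "qroot \<zeta> dd = qclass \<zeta> dd 0"

definition qmeasure :: "real \<Rightarrow> (real \<Rightarrow> real \<Rightarrow> real) \<Rightarrow> real set measure" where
  "qmeasure \<zeta> dd = distr (restrict_space lebesgue {0..\<zeta>})
      (borel_of (Metric_space.mtopology (qspace \<zeta> dd) (qdist \<zeta> dd))) (qclass \<zeta> dd)"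

definition mh :: "(real \<Rightarrow> real) \<Rightarrow> real \<Rightarrow> real \<Rightarrow> real" where
  "mh h s1 s2 = Inf (h ` {min s1 s2..max s1 s2})"

definition dh :: "(real \<Rightarrow> real) \<Rightarrow> real \<Rightarrow> real \<Rightarrow> real" where
  "dh h s1 s2 = h s1 + h s2 - 2 * mh h s1 s2"

definition dhw :: "(real \<Rightarrow> real) \<Rightarrow> (real \<Rightarrow> real \<Rightarrow> real) \<Rightarrow> real \<Rightarrow> real \<Rightarrow> real" where
  "dhw h w s1 s2 = w s1 (h s1) + w s2 (h s2)
     - 2 * min (Inf (w s1 ` {mh h s1 s2..h s1})) (Inf (w s2 ` {mh h s1 s2..h s2}))"

text \<open>Snake condition: (h,w) in Sigma([0,zeta]). Here w s is the path w_s,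
  considered on [0,\<infinity>) (its values at negative arguments are irrelevant).\<close>
definition is_snake :: "real \<Rightarrow> (real \<Rightarrow> real) \<Rightarrow> (real \<Rightarrow> real \<Rightarrow> real) \<Rightarrow> bool" where
  "is_snake \<zeta> h w \<longleftrightarrow>
     continuous_on {0..\<zeta>} h \<and> (\<forall>s\<in>{0..\<zeta>}. h s \<ge> 0) \<and> h 0 = 0 \<and> h \<zeta> = 0 \<and>
     (\<forall>s\<in>{0..\<zeta>}. continuous_on {0..} (w s)) \<and>
     (\<forall>s0\<in>{0..\<zeta>}. \<forall>R>0. \<forall>e>0. \<exists>\<delta>>0. \<forall>s\<in>{0..\<zeta>}. \<bar>s - s0\<bar> < \<delta> \<longrightarrow>
         (\<forall>r\<in>{0..R}. \<bar>w s r - w s0 r\<bar> < e)) \<and>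
     (\<forall>s\<in>{0..\<zeta>}. \<forall>r\<ge>h s. w s r = w s (h s)) \<and>
     (\<forall>s1\<in>{0..\<zeta>}. \<forall>s2\<in>{0..\<zeta>}. \<forall>r\<in>{0..mh h s1 s2}. w s1 r = w s2 r)"

definition Uhw :: "real \<Rightarrow> (real \<Rightarrow> real) \<Rightarrow> (real \<Rightarrow> real \<Rightarrow> real) \<Rightarrow> real set" where
  "Uhw \<zeta> h w = {s\<in>{0..\<zeta>}. h s > 0 \<and>
      (\<forall>e\<in>{0<..<h s}. Inf (w s ` {h s - e..h s}) < w s (h s))}"

end

theory Submission
  imports Defs
begin

text \<open>The distance \<open>dhw h w s1 s2\<close> is the sum of the tip labels \<open>w s1 (h s1)\<close> and \<open>w s2 (h s2)\<close>
  minus twice the minimum of the labels along the geodesic from \<open>s1\<close> to \<open>s2\<close> in the tree coded by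
  \<open>h\<close>. These minima satisfy an ultrametric inequality, which yields the four-point condition, and
  the intermediate value theorem for the labels along a geodesic yields points at every prescribed
  distance; hence the quotient is a real tree. Compactness, finiteness and full support of the
  measure come from the continuity of the projection of \<open>[0, \<zeta>]\<close> onto the quotient.

  For \<open>s \<in> Uhw \<zeta> h w\<close> the path \<open>w s\<close> drops below its tip value just before its end. So the class
  of \<open>s\<close> in the snake tree lies between the root and the class of \<open>t\<close> only if \<open>s\<close> is an ancestor of
  \<open>t\<close> in the tree coded by \<open>h\<close>, which identifies \<open>s\<close> with \<open>t\<close> when the class of \<open>s\<close> is a leaf there.
  Hence such times are leaves of the snake tree, and, by the same argument, the class of \<open>s\<close> in the
  snake tree is contained, up to a null set, in the class of \<open>s\<close> in the tree coded by \<open>h\<close>, which is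
  null as well.\<close>

section \<open>The four-point condition and real trees\<close>

definition four_point :: "'a set \<Rightarrow> ('a \<Rightarrow> 'a \<Rightarrow> real) \<Rightarrow> bool" where
  "four_point M d \<longleftrightarrow> (\<forall>x\<in>M. \<forall>y\<in>M. \<forall>z\<in>M. \<forall>t\<in>M.
      d x y + d z t \<le> max (d x z + d y t) (d x t + d y z))"

lemma four_pointD:
  "four_point M d \<Longrightarrow> x \<in> M \<Longrightarrow> y \<in> M \<Longrightarrow> z \<in> M \<Longrightarrow> t \<in> M \<Longrightarrow>
     d x y + d z t \<le> d x z + d y t \<or> d x y + d z t \<le> d x t + d y z"
  unfolding four_point_def le_max_iff_disj by blast

context Metric_space
begin

lemma four_point_between_dist:
  assumes "four_point M d" "a \<in> M" "b \<in> M" "x \<in> M" "y \<in> M"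
    and "d a x = p" "d x b = d a b - p" "d a y = q" "d y b = d a b - q"
  shows "d x y = \<bar>p - q\<bar>"
proof -
  have "d x y \<le> \<bar>p - q\<bar>"
    using four_pointD[OF assms(1), of x y a b] assms commute[of x a] commute[of y a] by auto
  moreover have "\<bar>p - q\<bar> \<le> d x y"
    using triangle[of a x y] triangle[of a y x] commute[of x y] assms by auto
  ultimately show ?thesis by simp
qed

lemma openin_strict_triangle:
  assumes "x \<in> M" "a \<in> M"
  shows "openin mtopology {y\<in>M. d y a < d y x + d x a}"
  unfolding openin_mtopology
proof (intro conjI allI impI subsetI)
  fix y assume "y \<in> {y\<in>M. d y a < d y x + d x a}"
  then have y: "y \<in> M" "d y a < d y x + d x a" by auto
  let ?r = "(d y x + d x a - d y a) / 2"
  show "\<exists>r>0. mball y r \<subseteq> {y\<in>M. d y a < d y x + d x a}"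
  proof (intro exI conjI subsetI)
    show "?r > 0" using y by simp
    fix y' assume "y' \<in> mball y ?r"
    then show "y' \<in> {y\<in>M. d y a < d y x + d x a}"
      using triangle[of y y' x] triangle[of y' y a] commute[of y y'] assms y by auto
  qed
qed auto

lemma four_point_openin_behind:
  assumes fp: "four_point M d" and xM: "x \<in> M" and aM: "a \<in> M"
  shows "openin mtopology {y\<in>M. y \<noteq> x \<and> d y x + d x a = d y a}"
  unfolding openin_mtopology
proof (intro conjI allI impI subsetI)
  fix y assume "y \<in> {y\<in>M. y \<noteq> x \<and> d y x + d x a = d y a}"
  then have yM: "y \<in> M" and pos: "d x y > 0" and behind: "d y x + d x a = d y a" using xM by auto
  show "\<exists>r>0. mball y r \<subseteq> {y\<in>M. y \<noteq> x \<and> d y x + d x a = d y a}"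
  proof (intro exI conjI subsetI)
    show "d x y / 2 > 0" using pos by auto
    fix y' assume "y' \<in> mball y (d x y / 2)"
    then have y'M: "y' \<in> M" and close: "d y y' < d x y / 2" by auto
    have "y' \<noteq> x" using close commute[of x y] pos by auto
    moreover from four_pointD[OF fp yM aM xM y'M] have "d y' x + d x a \<le> d y' a"
      using behind pos close triangle[OF xM y'M yM] commute[of y x] commute[of a y']
        commute[of a x] commute[of y y'] commute[of x y']
      by (elim disjE) linarith+
    ultimately show "y' \<in> {y\<in>M. y \<noteq> x \<and> d y x + d x a = d y a}"
      using triangle[OF y'M xM aM] y'M by auto
  qed
qed auto

lemma four_point_between_in_connected:
  assumes fp: "four_point M d" and xM: "x \<in> M" and aM: "a \<in> M" and bM: "b \<in> M"
    and btw: "d a x + d x b = d a b"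
    and C: "connectedin mtopology C" "a \<in> C" "b \<in> C"
  shows "x \<in> C"
proof (rule ccontr)
  assume xC: "x \<notin> C"
  then have "x \<noteq> a" "x \<noteq> b" using C by auto
  let ?S = "{y\<in>M. d y a < d y x + d x a}" and ?V = "{y\<in>M. y \<noteq> x \<and> d y x + d x a = d y a}"
  have "C \<subseteq> ?S \<union> ?V"
    using connectedin_subset_topspace[OF C(1)] xC triangle[OF _ xM aM] by fastforce
  moreover have "?S \<inter> ?V \<inter> C = {}" by auto
  moreover have "a \<in> ?S" "b \<in> ?V"
    using aM bM xM \<open>x \<noteq> a\<close> \<open>x \<noteq> b\<close> btw commute[of a x] commute[of b a] commute[of b x] by auto
  ultimately show False
    using C openin_strict_triangle[OF xM aM] four_point_openin_behind[OF fp xM aM]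
    unfolding connectedin by blast
qed

lemma four_point_leaf_not_between:
  assumes "four_point M d" "is_leaf M d r x" "a \<in> M" "b \<in> M" "d a x + d x b = d a b"
  shows "x = a \<or> x = b"
  using four_point_between_in_connected[OF assms(1), of x a b "M - {x}"] assms
  unfolding is_leaf_def by blast

lemma geodesicD:
  assumes "geodesic M d a b f" "s \<in> {0..d a b}"
  shows "f s \<in> M" "d a (f s) = s" "d (f s) b = d a b - s"
proof -
  have iso: "\<And>u v. u \<in> {0..d a b} \<Longrightarrow> v \<in> {0..d a b} \<Longrightarrow> d (f u) (f v) = \<bar>u - v\<bar>"
    and "f 0 = a" "f (d a b) = b" "f ` {0..d a b} \<subseteq> M"
    using assms(1) unfolding geodesic_def by auto
  then show "f s \<in> M" "d a (f s) = s" "d (f s) b = d a b - s"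
    using assms(2) iso[of 0 s] iso[of s "d a b"] by auto
qed

lemma geodesic_endpoints:
  assumes "geodesic M d a b f"
  shows "a \<in> M" "b \<in> M"
  using geodesicD(1)[OF assms, of 0] geodesicD(1)[OF assms, of "d a b"] assms
  unfolding geodesic_def by auto

lemma four_point_geodesic_unique:
  assumes fp: "four_point M d" and f: "geodesic M d a b f" and g: "geodesic M d a b g"
    and s: "s \<in> {0..d a b}"
  shows "f s = g s"
proof -
  have "d (f s) (g s) = \<bar>s - s\<bar>"
    using geodesicD[OF f s] geodesicD[OF g s] geodesic_endpoints[OF f]
    by (intro four_point_between_dist[OF fp]) auto
  then show ?thesis using geodesicD(1)[OF f s] geodesicD(1)[OF g s] by simp
qed

lemma connectedin_path_image:
  "continuous_map (top_of_set {0..1::real}) X q \<Longrightarrow> 0 \<le> u \<Longrightarrow> v \<le> 1 \<Longrightarrow>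
    connectedin X (q ` {u..v})"
  by (rule connectedin_continuous_map_image) (auto simp: connectedin_subtopology)

text \<open>The point of the geodesic at distance \<open>(d a y + d a b - d y b) / 2\<close> from \<open>a\<close> is the
  branch point of \<open>y\<close> on the geodesic.\<close>
lemma four_point_geodesic_branch_point:
  assumes fp: "four_point M d" and f: "geodesic M d a b f" and yM: "y \<in> M"
  obtains z where "z \<in> f ` {0..d a b}" "d a z + d z y = d a y" "d y z + d z b = d y b"
proof -
  note aM = geodesic_endpoints(1)[OF f] and bM = geodesic_endpoints(2)[OF f]
  define \<delta> where "\<delta> = (d a y + d a b - d y b) / 2"
  have \<delta>: "\<delta> \<in> {0..d a b}"
    using triangle[OF yM aM bM] triangle[OF aM bM yM] triangle[OF aM yM bM] commute[of y a]
      commute[of b y]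
    unfolding \<delta>_def by simp
  define z where "z = f \<delta>"
  note z = geodesicD[OF f \<delta>, folded z_def]
  have \<delta>2: "2 * \<delta> = d a y + d a b - d y b" unfolding \<delta>_def by simp
  from four_pointD[OF fp yM z(1) aM bM] have "d z y \<le> d a y - \<delta>"
    using z \<delta>2 commute[of z a] commute[of y a] commute[of y z] by (elim disjE) linarith+
  then have "d a z + d z y = d a y" using triangle[OF aM z(1) yM] z by linarith
  moreover from this have "d y z + d z b = d y b" using z \<delta>2 commute[of y z] by linarith
  ultimately show ?thesis using that \<delta> z_def by blast
qed

lemma four_point_arc_image:
  assumes fp: "four_point M d"
    and q: "continuous_map (top_of_set {0..1::real}) mtopology q"
    and inj: "inj_on q {0..1}" and q0: "q 0 = a" and q1: "q 1 = b"
    and f: "geodesic M d a b f"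
  shows "q ` {0..1} = f ` {0..d a b}"
proof
  note aM = geodesic_endpoints(1)[OF f] and bM = geodesic_endpoints(2)[OF f]
  show "f ` {0..d a b} \<subseteq> q ` {0..1}"
  proof
    fix z assume "z \<in> f ` {0..d a b}"
    then show "z \<in> q ` {0..1}"
      using four_point_between_in_connected[OF fp _ aM bM _ connectedin_path_image[OF q]]
        geodesicD[OF f] q0 q1 by force
  qed
  show "q ` {0..1} \<subseteq> f ` {0..d a b}"
  proof (rule ccontr)
    assume "\<not> q ` {0..1} \<subseteq> f ` {0..d a b}"
    then obtain t where t: "t \<in> {0..1}" and y: "q t \<notin> f ` {0..d a b}" by blast
    have yM: "q t \<in> M" using q t unfolding continuous_map by auto
    obtain z where z: "z \<in> f ` {0..d a b}" "d a z + d z (q t) = d a (q t)"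
      "d (q t) z + d z b = d (q t) b"
      using four_point_geodesic_branch_point[OF fp f yM] by blast
    have zM: "z \<in> M" using z(1) geodesicD(1)[OF f] by blast
    have "z \<in> q ` {0..t}"
      using four_point_between_in_connected[OF fp zM aM yM z(2) connectedin_path_image[OF q]]
        q0 t by force
    then obtain t1 where t1: "t1 \<in> {0..t}" "q t1 = z" by blast
    have "z \<in> q ` {t..1}"
      using four_point_between_in_connected[OF fp zM yM bM z(3) connectedin_path_image[OF q]]
        q1 t by force
    then obtain t2 where t2: "t2 \<in> {t..1}" "q t2 = z" by blast
    have "t1 = t2" using inj t t1 t2 unfolding inj_on_def by auto
    then have "t1 = t" using t1 t2 by simp
    then show False using t1 y z(1) by simp
  qed
qed

lemma real_tree_if_four_point:
  assumes fp: "four_point M d"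
    and between: "\<And>a b \<delta>. a \<in> M \<Longrightarrow> b \<in> M \<Longrightarrow> 0 \<le> \<delta> \<Longrightarrow> \<delta> \<le> d a b \<Longrightarrow>
                 \<exists>z\<in>M. d a z = \<delta> \<and> d z b = d a b - \<delta>"
  shows "real_tree M d"
proof -
  have "\<exists>f. geodesic M d a b f" if aM: "a \<in> M" and bM: "b \<in> M" for a b
  proof -
    obtain f where f: "\<And>\<delta>. \<delta> \<in> {0..d a b} \<Longrightarrow> f \<delta> \<in> M \<and> d a (f \<delta>) = \<delta> \<and> d (f \<delta>) b = d a b - \<delta>"
      using between[OF aM bM] by (metis atLeastAtMost_iff)
    have "geodesic M d a b f"
      unfolding geodesic_def
    proof (intro conjI ballI)
      show "f 0 = a" "f (d a b) = b" using f[of 0] f[of "d a b"] aM bM by auto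
      fix s t assume "s \<in> {0..d a b}" "t \<in> {0..d a b}"
      then show "d (f s) (f t) = \<bar>s - t\<bar>"
        using four_point_between_dist[OF fp aM bM] f by blast
    qed (use f in auto)
    then show ?thesis by blast
  qed
  then show ?thesis
    unfolding real_tree_def
    using Metric_space_axioms four_point_geodesic_unique[OF fp] four_point_arc_image[OF fp] by blast
qed

lemma continuous_map_geodesic:
  "geodesic M d a b f \<Longrightarrow> continuous_map (top_of_set {0..d a b}) mtopology f"
  unfolding continuous_map_to_metric geodesic_def
  by (intro ballI allI impI exI[of _ "{0..d a b} \<inter> ball _ _"] conjI openin_open_Int)
    (auto simp: dist_real_def image_subset_iff)

text \<open>The geodesics from the points \<open>y \<noteq> x\<close> to the root avoid \<open>x\<close>, and their union is \<open>M - {x}\<close>.\<close>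
lemma real_tree_leafI:
  assumes rt: "real_tree M d" and rM: "r \<in> M" and xM: "x \<in> M" and "x \<noteq> r"
    and not_between: "\<And>y. y \<in> M \<Longrightarrow> y \<noteq> x \<Longrightarrow> d y x + d x r \<noteq> d y r"
  shows "is_leaf M d r x"
proof -
  have "\<exists>f. geodesic M d y r f" if "y \<in> M" for y using rt that rM unfolding real_tree_def by blast
  then obtain g where g: "\<And>y. y \<in> M \<Longrightarrow> geodesic M d y r (g y)" by metis
  define C where "C y = g y ` {0..d y r}" for y
  have C: "connectedin mtopology (C y) \<and> C y \<subseteq> M - {x} \<and> y \<in> C y \<and> r \<in> C y"
    if y: "y \<in> M - {x}" for y
  proof (intro conjI)
    show "connectedin mtopology (C y)"
      unfolding C_def using y continuous_map_geodesic[OF g]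
      by (intro connectedin_continuous_map_image) (auto simp: connectedin_subtopology)
    have gy: "geodesic M d y r (g y)" using g y by blast
    show "C y \<subseteq> M - {x}"
    proof
      fix v assume "v \<in> C y"
      then obtain t where t: "t \<in> {0..d y r}" "v = g y t" unfolding C_def by blast
      then show "v \<in> M - {x}" using geodesicD[OF gy t(1)] not_between[of y] y by auto
    qed
    have "g y 0 = y" "g y (d y r) = r" "0 \<le> d y r" using gy unfolding geodesic_def by auto
    then show "y \<in> C y" "r \<in> C y" unfolding C_def by (metis atLeastAtMost_iff image_eqI order_refl)+
  qed
  have "M - {x} = \<Union> (C ` (M - {x}))" using C by blast
  moreover have "connectedin mtopology (\<Union> (C ` (M - {x})))"
    by (rule connectedin_Union) (use C in blast)+
  ultimately show ?thesis unfolding is_leaf_def using xM \<open>x \<noteq> r\<close> by simp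
qed

end

section \<open>Push-forward of Lebesgue measure on an interval\<close>

lemma openin_in_borel_of: "openin X U \<Longrightarrow> U \<in> sets (borel_of X)"
  unfolding borel_of_def by (subst sets_measure_of) (auto dest: openin_subset)

lemma space_borel_of [simp]: "space (borel_of X) = topspace X"
  unfolding borel_of_def by (subst space_measure_of) (auto dest: openin_subset)

lemma closedin_in_borel_of:
  assumes "closedin X C"
  shows "C \<in> sets (borel_of X)"
proof -
  have "space (borel_of X) - (topspace X - C) \<in> sets (borel_of X)"
    using assms by (intro sets.compl_sets openin_in_borel_of) (simp add: openin_diff)
  moreover have "space (borel_of X) - (topspace X - C) = C"
    using closedin_subset[OF assms] by auto
  ultimately show ?thesis by simp
qed

lemma emeasure_lebesgue_Icc: "(a::real) \<le> b \<Longrightarrow> emeasure lebesgue {a..b} = ennreal (b - a)"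
  by (subst emeasure_completion) auto

lemma sets_lebesgue_almost_sigma_compact:
  fixes S :: "'a::euclidean_space set"
  assumes "S \<in> sets lebesgue" "bounded S"
  obtains F :: "nat \<Rightarrow> 'a set"
  where "\<And>n. compact (F n)" "\<And>n. F n \<subseteq> S" "S - (\<Union>n. F n) \<in> null_sets lebesgue"
proof -
  obtain C T where C: "fsigma C" and T: "T \<in> null_sets lebesgue" and CT: "C \<union> T = S"
    using lebesgue_set_almost_fsigma[OF assms(1)] by metis
  from C obtain F where F: "\<And>n::nat. closed (F n)" "C = (\<Union>n. F n)"
    by (auto elim: fsigma.cases)
  have sub: "F n \<subseteq> S" for n using CT F(2) by blast
  show ?thesis
  proof (rule that[OF _ sub])
    show "compact (F n)" for n
      using F(1) bounded_subset[OF assms(2) sub] by (simp add: compact_eq_bounded_closed)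
    have "S - (\<Union>n. F n) \<subseteq> T" using CT F(2) by blast
    then show "S - (\<Union>n. F n) \<in> null_sets lebesgue" using T by (rule null_sets_completion_subset)
  qed
qed

context
  fixes a b :: real and X :: "'a topology" and f :: "real \<Rightarrow> 'a"
  assumes f: "continuous_map (top_of_set {a..b}) X f"
begin

lemma openin_vimage_Icc: "openin X U \<Longrightarrow> openin (top_of_set {a..b}) (f -` U \<inter> {a..b})"
  using openin_continuous_map_preimage[OF f] by (simp add: vimage_def Int_def conj_commute)

lemma measurable_continuous_map_Icc: "f \<in> measurable (lebesgue_on {a..b}) (borel_of X)"
  unfolding borel_of_def
proof (rule measurable_measure_of)
  show "f \<in> space (lebesgue_on {a..b}) \<rightarrow> topspace X"
    using f by (auto simp: space_restrict_space continuous_map)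
  fix U assume "U \<in> {U. openin X U}"
  then have "f -` U \<inter> {a..b} \<in> sets lebesgue"
    by (intro lebesgue_openin[OF openin_vimage_Icc]) auto
  then show "f -` U \<inter> space (lebesgue_on {a..b}) \<in> sets (lebesgue_on {a..b})"
    by (auto simp: space_restrict_space sets_restrict_space_iff)
qed (auto dest: openin_subset)

lemma emeasure_distr_continuous_map_Icc:
  assumes "A \<in> sets (borel_of X)"
  shows "emeasure (distr (lebesgue_on {a..b}) (borel_of X) f) A
    = emeasure lebesgue (f -` A \<inter> {a..b})"
  using emeasure_distr[OF measurable_continuous_map_Icc assms]
  by (simp add: space_restrict_space emeasure_restrict_space)

lemma finite_measure_distr_continuous_map_Icc:
  "finite_measure (distr (lebesgue_on {a..b}) (borel_of X) f)"
proof
  have "f -` topspace X \<inter> {a..b} = {a..b}" using f by (auto simp: continuous_map)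
  then show "emeasure (distr (lebesgue_on {a..b}) (borel_of X) f)
      (space (distr (lebesgue_on {a..b}) (borel_of X) f)) \<noteq> \<infinity>"
    using emeasure_distr_continuous_map_Icc[OF openin_in_borel_of[OF openin_topspace]]
    by (cases "a \<le> b") (auto simp: emeasure_lebesgue_Icc)
qed

lemma emeasure_distr_continuous_map_Icc_pos:
  assumes "a < b" "openin X U" "U \<inter> f ` {a..b} \<noteq> {}"
  shows "emeasure (distr (lebesgue_on {a..b}) (borel_of X) f) U > 0"
proof -
  obtain s where s: "s \<in> {a..b}" "f s \<in> U" using assms(3) by blast
  obtain T where T: "open T" "f -` U \<inter> {a..b} = {a..b} \<inter> T"
    using openin_vimage_Icc[OF assms(2)] unfolding openin_open by blast
  obtain e where e: "e > 0" "ball s e \<subseteq> T" using T s open_contains_ball by blast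
  define a' where "a' = max a (s - e/2)"
  define b' where "b' = min b (s + e/2)"
  have "a' < b'" using s assms(1) e unfolding a'_def b'_def by auto
  then have "0 < emeasure lebesgue {a'..b'}" by (simp add: emeasure_lebesgue_Icc)
  also have "\<dots> \<le> emeasure lebesgue (f -` U \<inter> {a..b})"
  proof (rule emeasure_mono)
    show "{a'..b'} \<subseteq> f -` U \<inter> {a..b}"
      using e unfolding T(2) a'_def b'_def by (auto simp: subset_eq dist_real_def)
    show "f -` U \<inter> {a..b} \<in> sets lebesgue"
      unfolding T(2) using T(1) by (simp add: borel_open sets_completionI_sets)
  qed
  also have "\<dots> = emeasure (distr (lebesgue_on {a..b}) (borel_of X) f) U"
    using emeasure_distr_continuous_map_Icc[OF openin_in_borel_of[OF assms(2)]] by simp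
  finally show ?thesis .
qed

text \<open>The set of \<open>x\<close> satisfying \<open>P\<close> need not be Borel; but almost all of \<open>[a, b]\<close> is covered by
  countably many compact sets on which \<open>P \<circ> f\<close> holds, and their images are closed.\<close>
lemma AE_distr_continuous_map_Icc:
  assumes X: "Hausdorff_space X" and ae: "AE s in lebesgue_on {a..b}. P (f s)"
  shows "AE x in distr (lebesgue_on {a..b}) (borel_of X) f. P x"
proof -
  from ae have "AE s in lebesgue. s \<in> {a..b} \<longrightarrow> P (f s)"
    by (subst (asm) AE_restrict_space_iff) auto
  then obtain N where "{s \<in> space lebesgue. \<not> (s \<in> {a..b} \<longrightarrow> P (f s))} \<subseteq> N"
    "emeasure lebesgue N = 0" "N \<in> sets lebesgue"
    by (rule AE_E)
  then have N: "N \<in> null_sets lebesgue" "\<And>s. s \<in> {a..b} - N \<Longrightarrow> P (f s)" by auto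
  have G: "{a..b} - N \<in> sets lebesgue" "bounded ({a..b} - N)" using N(1) by auto
  obtain F :: "nat \<Rightarrow> real set" where F: "\<And>n. compact (F n)" "\<And>n. F n \<subseteq> {a..b} - N"
    and null: "({a..b} - N) - (\<Union>n. F n) \<in> null_sets lebesgue"
    using sets_lebesgue_almost_sigma_compact[OF G] by blast
  define K where "K = (\<Union>n. f ` F n)"
  have "closedin X (f ` F n)" for n
    using F by (intro compactin_imp_closedin[OF X] image_compactin[OF _ f])
      (auto simp: compactin_subtopology)
  then have "topspace X - K \<in> sets (borel_of X)"
    unfolding K_def by (intro sets.Diff openin_in_borel_of[OF openin_topspace] sets.countable_UN)
      (auto intro: closedin_in_borel_of)
  moreover have "f -` (topspace X - K) \<inter> {a..b} \<subseteq> N \<union> (({a..b} - N) - (\<Union>n. F n))"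
    unfolding K_def by blast
  then have "f -` (topspace X - K) \<inter> {a..b} \<in> null_sets lebesgue"
    using N(1) null by (blast intro: null_sets_completion_subset)
  ultimately have "topspace X - K \<in> null_sets (distr (lebesgue_on {a..b}) (borel_of X) f)"
    using emeasure_distr_continuous_map_Icc[of "topspace X - K"] by (simp add: null_sets_def)
  moreover have "P x" if "x \<in> K" for x
    using that F(2) N(2) unfolding K_def by blast
  ultimately show ?thesis by (intro AE_I'[of "topspace X - K"]) auto
qed

end

section \<open>Quotients of an interval by a pseudometric\<close>

locale interval_pseudometric =
  fixes \<zeta> :: real and dd :: "real \<Rightarrow> real \<Rightarrow> real"
  assumes dd_refl: "s \<in> {0..\<zeta>} \<Longrightarrow> dd s s = 0"
    and dd_sym: "s \<in> {0..\<zeta>} \<Longrightarrow> t \<in> {0..\<zeta>} \<Longrightarrow> dd s t = dd t s"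
    and dd_triangle: "s \<in> {0..\<zeta>} \<Longrightarrow> t \<in> {0..\<zeta>} \<Longrightarrow> u \<in> {0..\<zeta>} \<Longrightarrow> dd s u \<le> dd s t + dd t u"
begin

lemma dd_nonneg: "s \<in> {0..\<zeta>} \<Longrightarrow> t \<in> {0..\<zeta>} \<Longrightarrow> 0 \<le> dd s t"
  using dd_triangle[of s t s] dd_refl[of s] dd_sym[of s t] by linarith

lemma qclass_self: "s \<in> {0..\<zeta>} \<Longrightarrow> s \<in> qclass \<zeta> dd s"
  unfolding qclass_def using dd_refl by auto

lemma qclass_eq_iff:
  assumes s: "s \<in> {0..\<zeta>}" and t: "t \<in> {0..\<zeta>}"
  shows "qclass \<zeta> dd s = qclass \<zeta> dd t \<longleftrightarrow> dd s t = 0"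
proof
  show "qclass \<zeta> dd s = qclass \<zeta> dd t \<Longrightarrow> dd s t = 0"
    using qclass_self[OF t] unfolding qclass_def by auto
  show "qclass \<zeta> dd s = qclass \<zeta> dd t" if "dd s t = 0"
    unfolding qclass_def
    using that dd_triangle[OF t s] dd_triangle[OF s t] dd_sym[OF s t] dd_nonneg[OF s] dd_nonneg[OF t]
    by (intro Collect_cong conj_cong refl) (smt (verit))
qed

lemma qspaceE:
  assumes "A \<in> qspace \<zeta> dd"
  obtains s where "s \<in> {0..\<zeta>}" "A = qclass \<zeta> dd s"
  using assms unfolding qspace_def by auto

lemma qclass_in_qspace: "s \<in> {0..\<zeta>} \<Longrightarrow> qclass \<zeta> dd s \<in> qspace \<zeta> dd"
  unfolding qspace_def by auto

lemma qdist_qclass: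
  assumes s: "s \<in> {0..\<zeta>}" and t: "t \<in> {0..\<zeta>}"
  shows "qdist \<zeta> dd (qclass \<zeta> dd s) (qclass \<zeta> dd t) = dd s t"
proof -
  define s' where "s' = (SOME x. x \<in> qclass \<zeta> dd s)"
  define t' where "t' = (SOME x. x \<in> qclass \<zeta> dd t)"
  have "s' \<in> qclass \<zeta> dd s" "t' \<in> qclass \<zeta> dd t"
    unfolding s'_def t'_def using qclass_self[OF s] qclass_self[OF t] by (metis someI)+
  then have s': "s' \<in> {0..\<zeta>}" "dd s s' = 0" and t': "t' \<in> {0..\<zeta>}" "dd t t' = 0"
    unfolding qclass_def by auto
  have "dd s' t' = dd s t"
    using dd_triangle[OF s'(1) s t'(1)] dd_triangle[OF s t t'(1)] dd_triangle[OF s s'(1) t]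
      dd_triangle[OF s'(1) t'(1) t] dd_sym[OF s s'(1)] dd_sym[OF t t'(1)] s' t' by linarith
  then show ?thesis unfolding qdist_def s'_def t'_def using qclass_in_qspace s t by auto
qed

sublocale quotient: Metric_space "qspace \<zeta> dd" "qdist \<zeta> dd"
proof
  fix A B
  show "0 \<le> qdist \<zeta> dd A B"
  proof (cases "A \<in> qspace \<zeta> dd \<and> B \<in> qspace \<zeta> dd")
    case True then show ?thesis by (auto elim!: qspaceE simp: qdist_qclass dd_nonneg)
  qed (auto simp: qdist_def)
  show "qdist \<zeta> dd A B = qdist \<zeta> dd B A"
  proof (cases "A \<in> qspace \<zeta> dd \<and> B \<in> qspace \<zeta> dd")
    case True then show ?thesis by (auto elim!: qspaceE simp: qdist_qclass dd_sym)
  qed (auto simp: qdist_def)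
next
  fix A B assume "A \<in> qspace \<zeta> dd" "B \<in> qspace \<zeta> dd"
  then show "qdist \<zeta> dd A B = 0 \<longleftrightarrow> A = B"
    by (elim qspaceE) (simp add: qdist_qclass qclass_eq_iff)
next
  fix A B C assume "A \<in> qspace \<zeta> dd" "B \<in> qspace \<zeta> dd" "C \<in> qspace \<zeta> dd"
  then show "qdist \<zeta> dd A C \<le> qdist \<zeta> dd A B + qdist \<zeta> dd B C"
    by (elim qspaceE) (simp add: qdist_qclass dd_triangle)
qed

lemma four_point_qspace:
  assumes "\<And>x y z t. x \<in> {0..\<zeta>} \<Longrightarrow> y \<in> {0..\<zeta>} \<Longrightarrow> z \<in> {0..\<zeta>} \<Longrightarrow> t \<in> {0..\<zeta>} \<Longrightarrow>
      dd x y + dd z t \<le> max (dd x z + dd y t) (dd x t + dd y z)"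
  shows "four_point (qspace \<zeta> dd) (qdist \<zeta> dd)"
  unfolding four_point_def
proof (intro ballI)
  fix A B C D assume "A \<in> qspace \<zeta> dd" "B \<in> qspace \<zeta> dd" "C \<in> qspace \<zeta> dd" "D \<in> qspace \<zeta> dd"
  then show "qdist \<zeta> dd A B + qdist \<zeta> dd C D
      \<le> max (qdist \<zeta> dd A C + qdist \<zeta> dd B D) (qdist \<zeta> dd A D + qdist \<zeta> dd B C)"
    by (elim qspaceE) (simp add: qdist_qclass assms)
qed

lemma real_tree_qspace:
  assumes four_point: "\<And>x y z t. x \<in> {0..\<zeta>} \<Longrightarrow> y \<in> {0..\<zeta>} \<Longrightarrow> z \<in> {0..\<zeta>} \<Longrightarrow> t \<in> {0..\<zeta>} \<Longrightarrow>
      dd x y + dd z t \<le> max (dd x z + dd y t) (dd x t + dd y z)"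
    and between: "\<And>s1 s2 \<delta>. s1 \<in> {0..\<zeta>} \<Longrightarrow> s2 \<in> {0..\<zeta>} \<Longrightarrow> 0 \<le> \<delta> \<Longrightarrow> \<delta> \<le> dd s1 s2 \<Longrightarrow>
      \<exists>\<sigma>\<in>{0..\<zeta>}. dd s1 \<sigma> = \<delta> \<and> dd \<sigma> s2 = dd s1 s2 - \<delta>"
  shows "real_tree (qspace \<zeta> dd) (qdist \<zeta> dd)"
proof (rule quotient.real_tree_if_four_point[OF four_point_qspace[OF four_point]])
  fix A B \<delta> assume "A \<in> qspace \<zeta> dd" "B \<in> qspace \<zeta> dd" and \<delta>: "0 \<le> \<delta>" "\<delta> \<le> qdist \<zeta> dd A B"
  then obtain s t where st: "s \<in> {0..\<zeta>}" "t \<in> {0..\<zeta>}" "A = qclass \<zeta> dd s" "B = qclass \<zeta> dd t"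
    by (metis qspaceE)
  then obtain \<sigma> where "\<sigma> \<in> {0..\<zeta>}" "dd s \<sigma> = \<delta>" "dd \<sigma> t = dd s t - \<delta>"
    using between[of s t \<delta>] \<delta> qdist_qclass by auto
  then show "\<exists>Z\<in>qspace \<zeta> dd. qdist \<zeta> dd A Z = \<delta> \<and> qdist \<zeta> dd Z B = qdist \<zeta> dd A B - \<delta>"
    using st qdist_qclass qclass_in_qspace by (intro bexI[of _ "qclass \<zeta> dd \<sigma>"]) auto
qed

end

locale continuous_interval_pseudometric = interval_pseudometric +
  assumes dd_continuous:
    "\<And>s0 e. s0 \<in> {0..\<zeta>} \<Longrightarrow> 0 < e \<Longrightarrow> \<exists>\<delta>>0. \<forall>s\<in>{0..\<zeta>}. \<bar>s - s0\<bar> < \<delta> \<longrightarrow> dd s0 s < e"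
begin

lemma continuous_map_qclass:
  "continuous_map (top_of_set {0..\<zeta>}) quotient.mtopology (qclass \<zeta> dd)"
  unfolding quotient.continuous_map_to_metric
proof (intro ballI allI impI)
  fix s0 e assume "s0 \<in> topspace (top_of_set {0..\<zeta>})" "(e::real) > 0"
  then have s0: "s0 \<in> {0..\<zeta>}" and "\<exists>\<delta>>0. \<forall>s\<in>{0..\<zeta>}. \<bar>s - s0\<bar> < \<delta> \<longrightarrow> dd s0 s < e"
    using dd_continuous by auto
  then obtain \<delta> where \<delta>: "\<delta> > 0" "\<forall>s\<in>{0..\<zeta>}. \<bar>s - s0\<bar> < \<delta> \<longrightarrow> dd s0 s < e" by blast
  show "\<exists>U. openin (top_of_set {0..\<zeta>}) U \<and> s0 \<in> U \<and>
      (\<forall>s\<in>U. qclass \<zeta> dd s \<in> quotient.mball (qclass \<zeta> dd s0) e)"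
    using s0 \<delta> qdist_qclass[OF s0] qclass_in_qspace
    by (intro exI[of _ "{0..\<zeta>} \<inter> ball s0 \<delta>"] conjI ballI openin_open_Int)
      (auto simp: dist_real_def abs_minus_commute)
qed

lemma compact_space_qspace: "compact_space quotient.mtopology"
proof -
  have "compactin quotient.mtopology (qclass \<zeta> dd ` {0..\<zeta>})"
    by (rule image_compactin[OF _ continuous_map_qclass]) (simp add: compactin_subtopology)
  then show ?thesis unfolding compact_space_def qspace_def[symmetric] by simp
qed

lemma space_qmeasure: "space (qmeasure \<zeta> dd) = qspace \<zeta> dd"
  by (simp add: qmeasure_def)

lemma sets_qmeasure: "sets (qmeasure \<zeta> dd) = sets (borel_of quotient.mtopology)"
  by (simp add: qmeasure_def)

lemma finite_measure_qmeasure: "finite_measure (qmeasure \<zeta> dd)"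
  unfolding qmeasure_def by (rule finite_measure_distr_continuous_map_Icc[OF continuous_map_qclass])

lemma msupport_qmeasure:
  assumes "0 < \<zeta>"
  shows "msupport (qspace \<zeta> dd) (qdist \<zeta> dd) (qmeasure \<zeta> dd) = qspace \<zeta> dd"
  unfolding msupport_def qmeasure_def
  using emeasure_distr_continuous_map_Icc_pos[OF continuous_map_qclass assms]
  by (auto simp: qspace_def)

lemma AE_qmeasure_iff:
  "(AE x in qmeasure \<zeta> dd. P x) \<longleftrightarrow> (AE s in lebesgue_on {0..\<zeta>}. P (qclass \<zeta> dd s))"
  unfolding qmeasure_def
  using AE_distrD[OF measurable_continuous_map_Icc[OF continuous_map_qclass]]
    AE_distr_continuous_map_Icc[OF continuous_map_qclass quotient.Hausdorff_space_mtopology]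
  by blast

lemma qmeasure_singleton_eq_0_iff:
  assumes "x \<in> qspace \<zeta> dd"
  shows "emeasure (qmeasure \<zeta> dd) {x} = 0 \<longleftrightarrow> (AE s in lebesgue_on {0..\<zeta>}. qclass \<zeta> dd s \<noteq> x)"
proof -
  have "{x} \<in> sets (qmeasure \<zeta> dd)"
    using closedin_Hausdorff_singleton[OF quotient.Hausdorff_space_mtopology] assms
    by (simp add: sets_qmeasure closedin_in_borel_of)
  then have "(AE y in qmeasure \<zeta> dd. y \<noteq> x) \<longleftrightarrow> emeasure (qmeasure \<zeta> dd) {x} = 0"
    using assms by (intro AE_iff_measurable) (auto simp: space_qmeasure)
  then show ?thesis using AE_qmeasure_iff[of "\<lambda>y. y \<noteq> x"] by simp
qed

end

section \<open>Extrema of continuous functions on intervals\<close>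

lemma Inf_image_Icc_attained:
  fixes f :: "real \<Rightarrow> real"
  assumes "continuous_on {a..b} f" "a \<le> b"
  shows "\<exists>r\<in>{a..b}. Inf (f ` {a..b}) = f r \<and> (\<forall>x\<in>{a..b}. f r \<le> f x)"
proof -
  obtain r where r: "r \<in> {a..b}" "\<forall>y\<in>{a..b}. f r \<le> f y"
    using continuous_attains_inf[of "{a..b}" f] assms by auto
  then have "Inf (f ` {a..b}) = f r" by (intro cInf_eq_minimum) auto
  then show ?thesis using r by blast
qed

lemma Inf_image_Icc_le:
  fixes f :: "real \<Rightarrow> real"
  assumes "continuous_on {a..b} f" "x \<in> {a..b}"
  shows "Inf (f ` {a..b}) \<le> f x"
  using Inf_image_Icc_attained[OF assms(1)] assms(2) by fastforce

lemma Inf_image_Icc_ge: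
  fixes f :: "real \<Rightarrow> real"
  assumes "a \<le> b" "\<And>x. x \<in> {a..b} \<Longrightarrow> c \<le> f x"
  shows "c \<le> Inf (f ` {a..b})"
  using assms by (intro cInf_greatest) auto

lemma Inf_image_Icc_split:
  fixes f :: "real \<Rightarrow> real"
  assumes f: "continuous_on {a..c} f" and "a \<le> b" "b \<le> c"
  shows "Inf (f ` {a..c}) = min (Inf (f ` {a..b})) (Inf (f ` {b..c}))"
proof -
  have f1: "continuous_on {a..b} f" and f2: "continuous_on {b..c} f"
    using f assms by (auto intro: continuous_on_subset)
  obtain r where r: "r \<in> {a..c}" "Inf (f ` {a..c}) = f r" "\<forall>x\<in>{a..c}. f r \<le> f x"
    using Inf_image_Icc_attained[OF f] assms by auto
  have "f r \<le> Inf (f ` {a..b})" "f r \<le> Inf (f ` {b..c})"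
    using r assms by (auto intro!: Inf_image_Icc_ge)
  moreover have "Inf (f ` {a..b}) \<le> f r \<or> Inf (f ` {b..c}) \<le> f r"
    using Inf_image_Icc_le[OF f1, of r] Inf_image_Icc_le[OF f2, of r] r(1) by force
  ultimately show ?thesis using r by linarith
qed

lemma Inf_image_Icc_bound:
  fixes f :: "real \<Rightarrow> real"
  assumes "continuous_on {a..b} f" "a \<le> b" "\<And>x. x \<in> {a..b} \<Longrightarrow> \<bar>f x - c\<bar> \<le> e"
  shows "\<bar>Inf (f ` {a..b}) - c\<bar> \<le> e"
  using Inf_image_Icc_attained[OF assms(1,2)] assms(3) by force

lemma IVT_last_crossing:
  fixes f :: "real \<Rightarrow> real"
  assumes f: "continuous_on {a..b} f" and r0: "r0 \<in> {a..b}" "f r0 \<le> y" and yb: "y \<le> f b"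
  obtains \<rho> where "\<rho> \<in> {r0..b}" "f \<rho> = y" "\<And>r. r \<in> {\<rho>..b} \<Longrightarrow> y \<le> f r"
proof -
  define R where "R = {a..b} \<inter> f -` {..y}"
  have "closed R" unfolding R_def by (rule continuous_closed_preimage[OF f]) auto
  moreover have "R \<noteq> {}" "bdd_above R" using r0 unfolding R_def by auto
  ultimately have \<rho>: "Sup R \<in> R" "\<And>r. r \<in> R \<Longrightarrow> r \<le> Sup R"
    by (auto intro: closed_contains_Sup cSup_upper)
  then have bounds: "r0 \<le> Sup R" "Sup R \<le> b" "a \<le> Sup R" "f (Sup R) \<le> y" using r0 unfolding R_def by auto
  moreover obtain x where x: "Sup R \<le> x" "x \<le> b" "f x = y"
    using IVT'[of f "Sup R" y b] calculation yb continuous_on_subset[OF f, of "{Sup R..b}"] by auto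
  moreover have "x \<in> R" using x calculation unfolding R_def by auto
  ultimately have "f (Sup R) = y" using \<rho>(2) by force
  moreover have "y \<le> f r" if "r \<in> {Sup R..b}" for r
  proof (rule ccontr)
    assume "\<not> y \<le> f r"
    then have "r = Sup R" using \<rho>(2)[of r] that bounds unfolding R_def by force
    then show False using \<open>\<not> y \<le> f r\<close> \<open>f (Sup R) = y\<close> by simp
  qed
  ultimately show ?thesis using that \<open>r0 \<le> Sup R\<close> \<open>Sup R \<le> b\<close> by auto
qed

lemma IVT_first_crossing:
  fixes f :: "real \<Rightarrow> real"
  assumes f: "continuous_on {a..b} f" and r0: "r0 \<in> {a..b}" "f r0 \<le> y" and ya: "y \<le> f a"
  obtains \<rho> where "\<rho> \<in> {a..r0}" "f \<rho> = y" "\<And>r. r \<in> {a..\<rho>} \<Longrightarrow> y \<le> f r"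
proof -
  have "continuous_on {-b..-a} (\<lambda>x. f (- x))"
    by (rule continuous_on_compose2[OF f]) (auto intro!: continuous_intros)
  then obtain \<rho> where \<rho>: "\<rho> \<in> {-r0..-a}" "f (- \<rho>) = y" "\<And>r. r \<in> {\<rho>..-a} \<Longrightarrow> y \<le> f (- r)"
    by (rule IVT_last_crossing[of "-b" "-a" _ "-r0" y]) (use r0 ya in auto)
  moreover have "y \<le> f r" if "r \<in> {a..-\<rho>}" for r using \<rho>(3)[of "- r"] that by auto
  ultimately show ?thesis using that[of "- \<rho>"] by auto
qed

section \<open>Snakes\<close>

lemma four_point_of_min_ultra:
  fixes P :: "'a \<Rightarrow> 'a \<Rightarrow> real"
  assumes ultra: "\<And>x y z. x \<in> A \<Longrightarrow> y \<in> A \<Longrightarrow> z \<in> A \<Longrightarrow> min (P x z) (P z y) \<le> P x y"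
    and sym: "\<And>x y. P x y = P y x"
    and A: "x \<in> A" "y \<in> A" "z \<in> A" "t \<in> A"
  shows "min (P x z + P y t) (P x t + P y z) \<le> P x y + P z t"
proof -
  have alg: "\<lbrakk>min c g \<le> a; min a g \<le> c; min a c \<le> g; min f e \<le> a; min a e \<le> f; min a f \<le> e;
      min f b \<le> c; min c b \<le> f; min c f \<le> b; min e b \<le> g; min g b \<le> e; min g e \<le> b\<rbrakk>
    \<Longrightarrow> min (c + e) (f + g) \<le> a + b" for a b c e f g :: real
    by (simp add: min_def split: if_splits)
  have u: "min (P x z) (P y z) \<le> P x y" if "x \<in> A" "y \<in> A" "z \<in> A" for x y z
    using ultra[OF that] sym[of z y] by simp
  show ?thesis
  proof (rule alg)
    show "min (P x z) (P y z) \<le> P x y" "min (P x t) (P y t) \<le> P x y" "min (P x t) (P z t) \<le> P x z"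
      "min (P y t) (P z t) \<le> P y z"
      using u A by blast+
    show "min (P x y) (P y z) \<le> P x z" "min (P x y) (P x z) \<le> P y z" "min (P x y) (P y t) \<le> P x t"
      "min (P x y) (P x t) \<le> P y t" "min (P x z) (P z t) \<le> P x t" "min (P x z) (P x t) \<le> P z t"
      "min (P y z) (P z t) \<le> P y t" "min (P y z) (P y t) \<le> P z t"
      using u[of x z y] u[of y z x] u[of x t y] u[of y t x] u[of x t z] u[of z t x] u[of y t z]
        u[of z t y] A sym by (simp_all add: min.commute)
  qed
qed

locale snake =
  fixes \<zeta> :: real and h :: "real \<Rightarrow> real" and w :: "real \<Rightarrow> real \<Rightarrow> real"
  assumes is_snake: "is_snake \<zeta> h w"
begin

lemma h_cont: "continuous_on {0..\<zeta>} h"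
  and h_nonneg: "s \<in> {0..\<zeta>} \<Longrightarrow> 0 \<le> h s"
  and h_0: "h 0 = 0"
  and w_agree: "s1 \<in> {0..\<zeta>} \<Longrightarrow> s2 \<in> {0..\<zeta>} \<Longrightarrow> r \<in> {0..mh h s1 s2} \<Longrightarrow> w s1 r = w s2 r"
  and w_locally_uniform: "s0 \<in> {0..\<zeta>} \<Longrightarrow> 0 < R \<Longrightarrow> 0 < e \<Longrightarrow>
    \<exists>\<delta>>0. \<forall>s\<in>{0..\<zeta>}. \<bar>s - s0\<bar> < \<delta> \<longrightarrow> (\<forall>r\<in>{0..R}. \<bar>w s r - w s0 r\<bar> < e)"
  using is_snake unfolding is_snake_def by blast+

lemma w_cont:
  assumes "s \<in> {0..\<zeta>}" "0 \<le> a"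
  shows "continuous_on {a..b} (w s)"
proof -
  have "continuous_on {0..} (w s)" using is_snake assms(1) unfolding is_snake_def by blast
  then show ?thesis by (rule continuous_on_subset) (use assms(2) in auto)
qed

lemma mh_commute: "mh h s1 s2 = mh h s2 s1"
  unfolding mh_def by (simp add: min.commute max.commute)

lemma mh_attained:
  assumes "s1 \<in> {0..\<zeta>}" "s2 \<in> {0..\<zeta>}"
  shows "\<exists>r\<in>{min s1 s2..max s1 s2}. mh h s1 s2 = h r \<and> (\<forall>x\<in>{min s1 s2..max s1 s2}. h r \<le> h x)"
  unfolding mh_def
  by (rule Inf_image_Icc_attained[OF continuous_on_subset[OF h_cont]]) (use assms in auto)

lemma mh_le:
  "s1 \<in> {0..\<zeta>} \<Longrightarrow> s2 \<in> {0..\<zeta>} \<Longrightarrow> x \<in> {min s1 s2..max s1 s2} \<Longrightarrow> mh h s1 s2 \<le> h x"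
  by (metis mh_attained)

lemma mh_le_left: "s1 \<in> {0..\<zeta>} \<Longrightarrow> s2 \<in> {0..\<zeta>} \<Longrightarrow> mh h s1 s2 \<le> h s1"
  and mh_le_right: "s1 \<in> {0..\<zeta>} \<Longrightarrow> s2 \<in> {0..\<zeta>} \<Longrightarrow> mh h s1 s2 \<le> h s2"
  by (auto intro: mh_le)

lemma mh_nonneg:
  assumes s: "s1 \<in> {0..\<zeta>}" "s2 \<in> {0..\<zeta>}"
  shows "0 \<le> mh h s1 s2"
proof -
  obtain r where "r \<in> {min s1 s2..max s1 s2}" "mh h s1 s2 = h r" using mh_attained[OF s] by blast
  moreover have "r \<in> {0..\<zeta>}" using calculation(1) s by (auto simp: min_def max_def split: if_splits)
  ultimately show ?thesis using h_nonneg by simp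
qed

lemma mh_self: "mh h s s = h s"
  unfolding mh_def by simp

lemma mh_zero: "s \<in> {0..\<zeta>} \<Longrightarrow> mh h s 0 = 0"
  using mh_nonneg[of s 0] mh_le_right[of s 0] h_0 by simp

lemma mh_ultra:
  assumes "s1 \<in> {0..\<zeta>}" "s2 \<in> {0..\<zeta>}" "s3 \<in> {0..\<zeta>}"
  shows "min (mh h s1 s3) (mh h s3 s2) \<le> mh h s1 s2"
proof -
  obtain r where r: "r \<in> {min s1 s2..max s1 s2}" "mh h s1 s2 = h r"
    using mh_attained[OF assms(1,2)] by auto
  then have "r \<in> {min s1 s3..max s1 s3} \<or> r \<in> {min s3 s2..max s3 s2}" by auto
  then show ?thesis using mh_le[OF assms(1,3), of r] mh_le[OF assms(3,2), of r] r by auto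
qed

text \<open>Along the geodesic from \<open>s1\<close> to \<open>s2\<close> in the tree coded by \<open>h\<close>, the labels are the values of
  \<open>w s1\<close> and \<open>w s2\<close> above the height \<open>mh h s1 s2\<close> of the branch point, so \<open>geodesic_min s1 s2\<close>
  is the minimal label on that geodesic.\<close>
definition tail_min :: "real \<Rightarrow> real \<Rightarrow> real" where
  "tail_min s a = Inf (w s ` {a..h s})"

definition geodesic_min :: "real \<Rightarrow> real \<Rightarrow> real" where
  "geodesic_min s1 s2 = min (tail_min s1 (mh h s1 s2)) (tail_min s2 (mh h s1 s2))"

lemma dhw_eq: "dhw h w s1 s2 = w s1 (h s1) + w s2 (h s2) - 2 * geodesic_min s1 s2"
  unfolding dhw_def geodesic_min_def tail_min_def by simp

lemma geodesic_min_commute: "geodesic_min s1 s2 = geodesic_min s2 s1"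
  unfolding geodesic_min_def by (simp add: mh_commute min.commute)

lemma tail_min_split:
  "s \<in> {0..\<zeta>} \<Longrightarrow> 0 \<le> a \<Longrightarrow> a \<le> b \<Longrightarrow> b \<le> h s \<Longrightarrow>
    tail_min s a = min (Inf (w s ` {a..b})) (tail_min s b)"
  unfolding tail_min_def by (rule Inf_image_Icc_split[OF w_cont]) auto

lemma tail_min_le: "s \<in> {0..\<zeta>} \<Longrightarrow> 0 \<le> a \<Longrightarrow> x \<in> {a..h s} \<Longrightarrow> tail_min s a \<le> w s x"
  unfolding tail_min_def by (rule Inf_image_Icc_le[OF w_cont])

lemma tail_min_ge: "a \<le> h s \<Longrightarrow> (\<And>x. x \<in> {a..h s} \<Longrightarrow> c \<le> w s x) \<Longrightarrow> c \<le> tail_min s a"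
  unfolding tail_min_def by (rule Inf_image_Icc_ge)

lemma tail_min_attained:
  "s \<in> {0..\<zeta>} \<Longrightarrow> 0 \<le> a \<Longrightarrow> a \<le> h s \<Longrightarrow> \<exists>r\<in>{a..h s}. tail_min s a = w s r"
  unfolding tail_min_def using Inf_image_Icc_attained[OF w_cont] by blast

lemma tail_min_top: "tail_min s (h s) = w s (h s)"
  unfolding tail_min_def by simp

lemma geodesic_min_le_left: "geodesic_min s1 s2 \<le> tail_min s1 (mh h s1 s2)"
  and geodesic_min_le_right: "geodesic_min s1 s2 \<le> tail_min s2 (mh h s1 s2)"
  unfolding geodesic_min_def by simp_all

lemma geodesic_min_self: "geodesic_min s s = w s (h s)"
  unfolding geodesic_min_def by (simp add: mh_self tail_min_top)

lemma geodesic_min_le_tip: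
  "s1 \<in> {0..\<zeta>} \<Longrightarrow> s2 \<in> {0..\<zeta>} \<Longrightarrow> geodesic_min s1 s2 \<le> w s1 (h s1)"
  using geodesic_min_le_left[of s1 s2] tail_min_le[of s1 "mh h s1 s2" "h s1"] mh_nonneg mh_le_left
  by fastforce

lemma geodesic_min_ultra_low_branch:
  assumes s: "s1 \<in> {0..\<zeta>}" "s2 \<in> {0..\<zeta>}" "s3 \<in> {0..\<zeta>}"
    and "mh h s1 s3 = mh h s2 s3" "mh h s1 s3 \<le> mh h s1 s2"
  shows "min (geodesic_min s1 s3) (geodesic_min s3 s2) \<le> geodesic_min s1 s2"
proof -
  let ?\<mu> = "mh h s1 s3" and ?m = "mh h s1 s2"
  have "tail_min s1 ?\<mu> \<le> tail_min s1 ?m" "tail_min s2 ?\<mu> \<le> tail_min s2 ?m"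
    using tail_min_split[OF s(1), of ?\<mu> ?m] tail_min_split[OF s(2), of ?\<mu> ?m] assms
      mh_nonneg[OF s(1,3)] mh_le_left[OF s(1,2)] mh_le_right[OF s(1,2)] by simp_all
  moreover have "geodesic_min s1 s3 \<le> tail_min s1 ?\<mu>" "geodesic_min s3 s2 \<le> tail_min s2 ?\<mu>"
    using geodesic_min_le_left[of s1 s3] geodesic_min_le_right[of s3 s2] assms mh_commute[of s3 s2]
    by simp_all
  ultimately show ?thesis unfolding geodesic_min_def[of s1 s2] by linarith
qed

lemma geodesic_min_ultra_high_branch:
  assumes s: "s1 \<in> {0..\<zeta>}" "s2 \<in> {0..\<zeta>}" "s3 \<in> {0..\<zeta>}"
    and eq: "mh h s1 s2 = mh h s2 s3" and le: "mh h s1 s2 \<le> mh h s1 s3"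
  shows "min (geodesic_min s1 s3) (geodesic_min s3 s2) \<le> geodesic_min s1 s2"
proof -
  let ?\<mu> = "mh h s1 s2" and ?m = "mh h s1 s3"
  have \<mu>: "0 \<le> ?\<mu>" using mh_nonneg[OF s(1,2)] .
  have "tail_min s1 ?\<mu> = min (Inf (w s1 ` {?\<mu>..?m})) (tail_min s1 ?m)"
    "tail_min s3 ?\<mu> = min (Inf (w s3 ` {?\<mu>..?m})) (tail_min s3 ?m)"
    using tail_min_split[OF s(1) \<mu> le] tail_min_split[OF s(3) \<mu> le] mh_le_left[OF s(1,3)]
      mh_le_right[OF s(1,3)] by simp_all
  moreover have "Inf (w s1 ` {?\<mu>..?m}) = Inf (w s3 ` {?\<mu>..?m})"
    using w_agree[OF s(1,3)] \<mu> by (intro image_cong[THEN arg_cong]) auto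
  moreover have "geodesic_min s1 s3 \<le> tail_min s1 ?m"
    "geodesic_min s3 s2 \<le> tail_min s3 ?\<mu>" "geodesic_min s3 s2 \<le> tail_min s2 ?\<mu>"
    using geodesic_min_le_left[of s1 s3] geodesic_min_le_left[of s3 s2]
      geodesic_min_le_right[of s3 s2] eq mh_commute[of s3 s2] by simp_all
  ultimately show ?thesis unfolding geodesic_min_def[of s1 s2] by linarith
qed

lemma geodesic_min_ultra:
  assumes s: "s1 \<in> {0..\<zeta>}" "s2 \<in> {0..\<zeta>}" "s3 \<in> {0..\<zeta>}"
  shows "min (geodesic_min s1 s3) (geodesic_min s3 s2) \<le> geodesic_min s1 s2"
proof -
  have "min (mh h s1 s3) (mh h s3 s2) \<le> mh h s1 s2" "min (mh h s1 s2) (mh h s2 s3) \<le> mh h s1 s3"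
    "min (mh h s2 s1) (mh h s1 s3) \<le> mh h s2 s3"
    using mh_ultra s by blast+
  then consider "mh h s1 s3 = mh h s2 s3 \<and> mh h s1 s3 \<le> mh h s1 s2"
    | "mh h s1 s2 = mh h s2 s3 \<and> mh h s1 s2 \<le> mh h s1 s3"
    | "mh h s1 s2 = mh h s1 s3 \<and> mh h s1 s2 \<le> mh h s2 s3"
    using mh_commute[of s3 s2] mh_commute[of s2 s1] by (auto simp: min_def split: if_splits)
  then show ?thesis
  proof cases
    case 3
    then have "min (geodesic_min s2 s3) (geodesic_min s3 s1) \<le> geodesic_min s2 s1"
      using mh_commute by (intro geodesic_min_ultra_high_branch[OF s(2,1,3)]) auto
    then show ?thesis using geodesic_min_commute by (simp add: min.commute)
  qed (use geodesic_min_ultra_low_branch[OF s] geodesic_min_ultra_high_branch[OF s] in blast)+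
qed

lemma dhw_four_point:
  assumes "x \<in> {0..\<zeta>}" "y \<in> {0..\<zeta>}" "z \<in> {0..\<zeta>}" "t \<in> {0..\<zeta>}"
  shows "dhw h w x y + dhw h w z t \<le> max (dhw h w x z + dhw h w y t) (dhw h w x t + dhw h w y z)"
proof -
  have "min (geodesic_min x z + geodesic_min y t) (geodesic_min x t + geodesic_min y z)
      \<le> geodesic_min x y + geodesic_min z t"
    by (rule four_point_of_min_ultra[of "{0..\<zeta>}"])
      (use geodesic_min_ultra geodesic_min_commute assms in auto)
  then show ?thesis unfolding dhw_eq min_le_iff_disj le_max_iff_disj by (elim disjE) linarith+
qed

sublocale interval_pseudometric \<zeta> "dhw h w"
proof
  fix s t u assume s: "s \<in> {0..\<zeta>}" and t: "t \<in> {0..\<zeta>}" and u: "u \<in> {0..\<zeta>}"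
  show "dhw h w s s = 0" unfolding dhw_eq geodesic_min_self by simp
  show "dhw h w s t = dhw h w t s" unfolding dhw_eq geodesic_min_commute[of s t] by simp
  show "dhw h w s u \<le> dhw h w s t + dhw h w t u"
    using dhw_four_point[OF s u t t] unfolding dhw_eq geodesic_min_self geodesic_min_commute[of u t]
    by simp
qed

text \<open>The ancestor of \<open>s\<close> at height \<open>\<rho>\<close>: the last time before \<open>s\<close> at which \<open>h\<close> equals \<open>\<rho>\<close>.\<close>
lemma ancestor:
  assumes s: "s \<in> {0..\<zeta>}" and \<rho>: "0 \<le> \<rho>" "\<rho> \<le> h s"
  obtains \<sigma> where "\<sigma> \<in> {0..\<zeta>}" "h \<sigma> = \<rho>" "mh h \<sigma> s = \<rho>" "\<And>r. r \<in> {0..\<rho>} \<Longrightarrow> w \<sigma> r = w s r"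
proof -
  have "continuous_on {0..s} h" by (rule continuous_on_subset[OF h_cont]) (use s in auto)
  then obtain \<sigma> where \<sigma>: "\<sigma> \<in> {0..s}" "h \<sigma> = \<rho>" "\<And>r. r \<in> {\<sigma>..s} \<Longrightarrow> \<rho> \<le> h r"
    by (rule IVT_last_crossing[of 0 s h 0 \<rho>]) (use s \<rho> h_0 in auto)
  have "mh h \<sigma> s = Inf (h ` {\<sigma>..s})" unfolding mh_def using \<sigma> by simp
  also have "\<dots> = \<rho>" by (rule cInf_eq_minimum[of \<rho>]) (use \<sigma> in force)+
  finally have "mh h \<sigma> s = \<rho>" .
  moreover have "\<sigma> \<in> {0..\<zeta>}" using \<sigma>(1) s by auto
  ultimately show ?thesis using that \<sigma>(2) s w_agree[of \<sigma> s] by blast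
qed

lemma mh_ancestor:
  assumes s: "s \<in> {0..\<zeta>}" "s' \<in> {0..\<zeta>}" "\<sigma> \<in> {0..\<zeta>}"
    and \<sigma>: "h \<sigma> = \<rho>" "mh h \<sigma> s = \<rho>" and le: "mh h s s' \<le> \<rho>"
  shows "mh h \<sigma> s' = mh h s s'"
  using mh_ultra[of \<sigma> s' s] mh_ultra[of s s' \<sigma>] mh_le_left[of \<sigma> s'] s \<sigma> le mh_commute[of s \<sigma>]
  by (auto simp: min_def split: if_splits)

lemma tail_min_ancestor:
  assumes "\<And>r. r \<in> {0..h \<sigma>} \<Longrightarrow> w \<sigma> r = w s r" "0 \<le> a"
  shows "tail_min \<sigma> a = Inf (w s ` {a..h \<sigma>})"
  unfolding tail_min_def using assms by (intro image_cong[THEN arg_cong]) auto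

text \<open>If the level \<open>y\<close> is reached on the part of the geodesic coming from \<open>s1\<close>, the point is the
  ancestor of \<open>s1\<close> at the last height where \<open>w s1\<close> takes the value \<open>y\<close>.\<close>
lemma level_point_first_branch:
  assumes s1: "s1 \<in> {0..\<zeta>}" and s2: "s2 \<in> {0..\<zeta>}"
    and y: "tail_min s1 (mh h s1 s2) \<le> y" "y \<le> w s1 (h s1)"
  obtains \<sigma> where "\<sigma> \<in> {0..\<zeta>}" "w \<sigma> (h \<sigma>) = y" "geodesic_min s1 \<sigma> = y"
    "geodesic_min \<sigma> s2 = geodesic_min s1 s2"
proof -
  define m where "m = mh h s1 s2"
  have m: "0 \<le> m" "m \<le> h s1" unfolding m_def using mh_nonneg mh_le_left s1 s2 by auto
  obtain r0 where r0: "r0 \<in> {m..h s1}" "tail_min s1 m = w s1 r0"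
    using tail_min_attained[OF s1 m] by blast
  obtain \<rho> where \<rho>: "\<rho> \<in> {r0..h s1}" "w s1 \<rho> = y" "\<And>r. r \<in> {\<rho>..h s1} \<Longrightarrow> y \<le> w s1 r"
    by (rule IVT_last_crossing[OF w_cont[OF s1 m(1)] r0(1)]) (use r0(2) y m_def in auto)
  have \<rho>m: "0 \<le> \<rho>" "m \<le> \<rho>" "\<rho> \<le> h s1" using \<rho>(1) r0(1) m by auto
  have tail_\<rho>: "tail_min s1 \<rho> = y"
    using tail_min_le[OF s1 \<rho>m(1), of \<rho>] tail_min_ge[of \<rho> s1 y] \<rho> \<rho>m by fastforce
  have "Inf (w s1 ` {m..\<rho>}) \<le> y"
    using Inf_image_Icc_le[OF w_cont[OF s1 m(1)], of \<rho>] \<rho>m \<rho>(2) by simp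
  then have tail_m: "tail_min s1 m = Inf (w s1 ` {m..\<rho>})"
    using tail_min_split[OF s1 m(1) \<rho>m(2,3)] tail_\<rho> by simp
  obtain \<sigma> where \<sigma>: "\<sigma> \<in> {0..\<zeta>}" "h \<sigma> = \<rho>" "mh h \<sigma> s1 = \<rho>" "\<And>r. r \<in> {0..\<rho>} \<Longrightarrow> w \<sigma> r = w s1 r"
    using ancestor[OF s1 \<rho>m(1,3)] by blast
  have tip: "w \<sigma> (h \<sigma>) = y" using \<sigma>(2) \<sigma>(4)[of \<rho>] \<rho>m \<rho>(2) by simp
  have "geodesic_min s1 \<sigma> = y"
    unfolding geodesic_min_def using mh_commute[of s1 \<sigma>] \<sigma>(2,3) tail_\<rho> tip tail_min_top[of \<sigma>] by simp
  moreover have "mh h \<sigma> s2 = m"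
    unfolding m_def using mh_ancestor[OF s1 s2 \<sigma>(1) \<sigma>(2,3)] \<rho>m m_def by simp
  then have "geodesic_min \<sigma> s2 = geodesic_min s1 s2"
    unfolding geodesic_min_def[of \<sigma>] using tail_min_ancestor[of \<sigma> s1 m] \<sigma>(2,4) m tail_m m_def
    by (simp add: geodesic_min_def)
  ultimately show ?thesis using that \<sigma>(1) tip by blast
qed

text \<open>Otherwise the level is reached on the part coming from \<open>s2\<close>, at the first height above the
  branch point where \<open>w s2\<close> takes the value \<open>y\<close>.\<close>
lemma level_point_second_branch:
  assumes s1: "s1 \<in> {0..\<zeta>}" and s2: "s2 \<in> {0..\<zeta>}"
    and y: "geodesic_min s1 s2 \<le> y" "y < tail_min s1 (mh h s1 s2)"
  obtains \<sigma> where "\<sigma> \<in> {0..\<zeta>}" "w \<sigma> (h \<sigma>) = y" "geodesic_min s1 \<sigma> = y"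
    "geodesic_min \<sigma> s2 = geodesic_min s1 s2"
proof -
  define m where "m = mh h s1 s2"
  have m: "0 \<le> m" "m \<le> h s1" "m \<le> h s2"
    unfolding m_def using mh_nonneg mh_le_left mh_le_right s1 s2 by auto
  have P: "geodesic_min s1 s2 = tail_min s2 m" "tail_min s2 m \<le> y"
    using y unfolding geodesic_min_def m_def by auto
  obtain r0 where r0: "r0 \<in> {m..h s2}" "tail_min s2 m = w s2 r0"
    using tail_min_attained[OF s2 m(1,3)] by blast
  have "w s2 m = w s1 m" using w_agree[OF s2 s1, of m] mh_commute[of s2 s1] m m_def by simp
  then have ym: "y \<le> w s2 m" using tail_min_le[OF s1 m(1), of m] m y(2) m_def by simp
  obtain \<rho> where \<rho>: "\<rho> \<in> {m..r0}" "w s2 \<rho> = y" "\<And>r. r \<in> {m..\<rho>} \<Longrightarrow> y \<le> w s2 r"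
    by (rule IVT_first_crossing[OF w_cont[OF s2 m(1)] r0(1)]) (use r0(2) P(2) ym in auto)
  have \<rho>m: "0 \<le> \<rho>" "m \<le> \<rho>" "\<rho> \<le> h s2" using \<rho>(1) r0(1) m by auto
  have inf_\<rho>: "Inf (w s2 ` {m..\<rho>}) = y"
    using Inf_image_Icc_le[OF w_cont[OF s2 m(1)], of \<rho>] Inf_image_Icc_ge[of m \<rho> y "w s2"] \<rho> \<rho>m
    by fastforce
  obtain \<sigma> where \<sigma>: "\<sigma> \<in> {0..\<zeta>}" "h \<sigma> = \<rho>" "mh h \<sigma> s2 = \<rho>" "\<And>r. r \<in> {0..\<rho>} \<Longrightarrow> w \<sigma> r = w s2 r"
    using ancestor[OF s2 \<rho>m(1,3)] by blast
  have tip: "w \<sigma> (h \<sigma>) = y" using \<sigma>(2) \<sigma>(4)[of \<rho>] \<rho>m \<rho>(2) by simp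
  have "mh h \<sigma> s1 = m"
    using mh_ancestor[OF s2 s1 \<sigma>(1) \<sigma>(2,3)] \<rho>m m_def mh_commute[of s2 s1] by simp
  then have "geodesic_min s1 \<sigma> = y"
    unfolding geodesic_min_def using mh_commute[of s1 \<sigma>] tail_min_ancestor[of \<sigma> s2 m] \<sigma>(2,4) m
      inf_\<rho> y(2) m_def by simp
  moreover have "geodesic_min \<sigma> s2 = geodesic_min s1 s2"
    unfolding geodesic_min_def[of \<sigma>] \<sigma>(3) using tip tail_min_top[of \<sigma>] \<sigma>(2) P
      tail_min_split[OF s2 m(1) \<rho>m(2,3)] inf_\<rho> by simp
  ultimately show ?thesis using that \<sigma>(1) tip by blast
qed

lemma level_point:
  assumes s1: "s1 \<in> {0..\<zeta>}" and s2: "s2 \<in> {0..\<zeta>}"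
    and y: "geodesic_min s1 s2 \<le> y" "y \<le> w s1 (h s1)"
  obtains \<sigma> where "\<sigma> \<in> {0..\<zeta>}" "dhw h w s1 \<sigma> = w s1 (h s1) - y"
    "dhw h w \<sigma> s2 = w s2 (h s2) + y - 2 * geodesic_min s1 s2"
proof -
  obtain \<sigma> where "\<sigma> \<in> {0..\<zeta>}" "w \<sigma> (h \<sigma>) = y" "geodesic_min s1 \<sigma> = y"
    "geodesic_min \<sigma> s2 = geodesic_min s1 s2"
  proof (cases "tail_min s1 (mh h s1 s2) \<le> y")
    case True
    then show ?thesis using level_point_first_branch[OF s1 s2 True y(2)] that by blast
  next
    case False
    then show ?thesis using level_point_second_branch[OF s1 s2 y(1)] that by force
  qed
  then show ?thesis using that unfolding dhw_eq by auto
qed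

lemma dhw_between:
  assumes s1: "s1 \<in> {0..\<zeta>}" and s2: "s2 \<in> {0..\<zeta>}" and \<delta>: "0 \<le> \<delta>" "\<delta> \<le> dhw h w s1 s2"
  shows "\<exists>\<sigma>\<in>{0..\<zeta>}. dhw h w s1 \<sigma> = \<delta> \<and> dhw h w \<sigma> s2 = dhw h w s1 s2 - \<delta>"
proof -
  let ?P = "geodesic_min s1 s2" and ?W1 = "w s1 (h s1)" and ?W2 = "w s2 (h s2)"
  have D: "dhw h w s1 s2 = ?W1 + ?W2 - 2 * ?P" by (rule dhw_eq)
  show ?thesis
  proof (cases "\<delta> \<le> ?W1 - ?P")
    case True
    then obtain \<sigma> where "\<sigma> \<in> {0..\<zeta>}" "dhw h w s1 \<sigma> = ?W1 - (?W1 - \<delta>)"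
      "dhw h w \<sigma> s2 = ?W2 + (?W1 - \<delta>) - 2 * ?P"
      using level_point[OF s1 s2, of "?W1 - \<delta>"] \<delta> by auto
    then show ?thesis using D by auto
  next
    case False
    then obtain \<sigma> where "\<sigma> \<in> {0..\<zeta>}" "dhw h w s2 \<sigma> = ?W2 - (\<delta> - ?W1 + 2 * ?P)"
      "dhw h w \<sigma> s1 = ?W1 + (\<delta> - ?W1 + 2 * ?P) - 2 * geodesic_min s2 s1"
      using level_point[OF s2 s1, of "\<delta> - ?W1 + 2 * ?P"] \<delta> D geodesic_min_commute[of s1 s2] by auto
    then show ?thesis using D geodesic_min_commute[of s1 s2] dd_sym[OF s2] dd_sym[OF _ s1]
      by auto
  qed
qed

text \<open>For \<open>s\<close> close to \<open>s0\<close>, the branch point \<open>mh h s0 s\<close> is close to \<open>h s0\<close>, so all labels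
  entering \<open>dhw h w s0 s\<close> are close to the tip label \<open>w s0 (h s0)\<close>.\<close>
lemma dhw_continuous:
  assumes s0: "s0 \<in> {0..\<zeta>}" and e: "0 < e"
  shows "\<exists>\<delta>>0. \<forall>s\<in>{0..\<zeta>}. \<bar>s - s0\<bar> < \<delta> \<longrightarrow> dhw h w s0 s < e"
proof -
  define c where "c = w s0 (h s0)"
  define \<epsilon> where "\<epsilon> = e / 7"
  have \<epsilon>: "\<epsilon> > 0" using e unfolding \<epsilon>_def by simp
  have h0: "0 \<le> h s0" using h_nonneg s0 by simp
  have "continuous_on {0..h s0 + 1} (w s0)" using w_cont[OF s0] by simp
  then obtain \<eta> where \<eta>: "\<eta> > 0" "\<And>x. x \<in> {0..h s0 + 1} \<Longrightarrow> \<bar>x - h s0\<bar> < \<eta> \<Longrightarrow> \<bar>w s0 x - c\<bar> < \<epsilon>"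
    using h0 \<epsilon> unfolding continuous_on_iff c_def dist_real_def
    by (metis atLeastAtMost_iff le_add_same_cancel1 zero_le_one)
  define \<eta>' where "\<eta>' = min \<eta> 1"
  obtain \<delta>1 where \<delta>1: "\<delta>1 > 0" "\<And>s. s \<in> {0..\<zeta>} \<Longrightarrow> \<bar>s - s0\<bar> < \<delta>1 \<Longrightarrow> \<bar>h s - h s0\<bar> < \<eta>'"
    using h_cont s0 \<eta>(1) unfolding continuous_on_iff dist_real_def \<eta>'_def
    by (metis min_less_iff_conj zero_less_one)
  obtain \<delta>2 where \<delta>2: "\<delta>2 > 0"
    "\<And>s r. s \<in> {0..\<zeta>} \<Longrightarrow> \<bar>s - s0\<bar> < \<delta>2 \<Longrightarrow> r \<in> {0..h s0 + 1} \<Longrightarrow> \<bar>w s r - w s0 r\<bar> < \<epsilon>"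
    using w_locally_uniform[OF s0, of "h s0 + 1" \<epsilon>] h0 \<epsilon> by auto
  have "dhw h w s0 s < e" if s: "s \<in> {0..\<zeta>}" and ds: "\<bar>s - s0\<bar> < min \<delta>1 \<delta>2" for s
  proof -
    define m where "m = mh h s0 s"
    obtain r where r: "r \<in> {min s0 s..max s0 s}" "m = h r" using mh_attained[OF s0 s] m_def by blast
    have "r \<in> {0..\<zeta>}" "\<bar>r - s0\<bar> < \<delta>1"
      using r(1) s s0 ds by (auto simp: min_def max_def split: if_splits)
    then have m_low: "h s0 - \<eta>' < m" using \<delta>1(2) r(2) by fastforce
    have hs: "\<bar>h s - h s0\<bar> < \<eta>'" using \<delta>1(2) s ds by simp
    have m: "0 \<le> m" "m \<le> h s0" "m \<le> h s"
      unfolding m_def using mh_nonneg mh_le_left mh_le_right s s0 by auto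
    have W0: "\<bar>w s0 x - c\<bar> \<le> \<epsilon>" if "x \<in> {m..h s0}" for x
      using \<eta>(2)[of x] that m m_low unfolding \<eta>'_def by fastforce
    have W: "\<bar>w s x - c\<bar> \<le> 2 * \<epsilon>" if "x \<in> {m..h s}" for x
      using \<eta>(2)[of x] \<delta>2(2)[OF s _, of x] that m m_low hs ds unfolding \<eta>'_def by fastforce
    have "\<bar>tail_min s0 m - c\<bar> \<le> \<epsilon>" "\<bar>tail_min s m - c\<bar> \<le> 2 * \<epsilon>"
      unfolding tail_min_def using W0 W m
      by (auto intro!: Inf_image_Icc_bound w_cont s0 s)
    moreover have "\<bar>w s (h s) - c\<bar> \<le> 2 * \<epsilon>" using W[of "h s"] m by simp
    ultimately have "dhw h w s0 s \<le> 6 * \<epsilon>"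
      unfolding dhw_eq geodesic_min_def m_def[symmetric] c_def[symmetric] by (auto simp: min_def)
    then show ?thesis using \<epsilon> unfolding \<epsilon>_def by simp
  qed
  then show ?thesis using \<delta>1(1) \<delta>2(1) by (intro exI[of _ "min \<delta>1 \<delta>2"]) auto
qed

sublocale continuous_interval_pseudometric \<zeta> "dhw h w"
  by unfold_locales (rule dhw_continuous)

lemma real_tree_snake: "real_tree (qspace \<zeta> (dhw h w)) (qdist \<zeta> (dhw h w))"
  by (rule real_tree_qspace[OF dhw_four_point dhw_between])

lemma is_snake_height: "is_snake \<zeta> h (\<lambda>s r. min r (h s))"
  unfolding is_snake_def
proof (intro conjI ballI allI impI)
  fix s0 R e :: real assume s0: "s0 \<in> {0..\<zeta>}" and "0 < e"
  then obtain \<delta> where "\<delta> > 0" "\<forall>s\<in>{0..\<zeta>}. \<bar>s - s0\<bar> < \<delta> \<longrightarrow> \<bar>h s - h s0\<bar> < e"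
    using h_cont unfolding continuous_on_iff dist_real_def by blast
  then show "\<exists>\<delta>>0. \<forall>s\<in>{0..\<zeta>}. \<bar>s - s0\<bar> < \<delta> \<longrightarrow> (\<forall>r\<in>{0..R}. \<bar>min r (h s) - min r (h s0)\<bar> < e)"
    by (intro exI[of _ \<delta>]) (auto simp: min_def)
next
  fix s1 s2 r assume "s1 \<in> {0..\<zeta>}" "s2 \<in> {0..\<zeta>}" "r \<in> {0..mh h s1 s2}"
  then show "min r (h s1) = min r (h s2)" using mh_le_left[of s1 s2] mh_le_right[of s1 s2] by auto
qed (use h_cont h_nonneg h_0 is_snake in \<open>auto simp: is_snake_def intro: continuous_intros\<close>)

lemma dh_eq_dhw_height:
  assumes "s1 \<in> {0..\<zeta>}" "s2 \<in> {0..\<zeta>}"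
  shows "dh h s1 s2 = dhw h (\<lambda>s r. min r (h s)) s1 s2"
proof -
  let ?m = "mh h s1 s2"
  have "Inf ((\<lambda>r. min r (h s)) ` {?m..h s}) = ?m" if "?m \<le> h s" for s
    using that by (intro cInf_eq_minimum) auto
  then show ?thesis unfolding dh_def dhw_def using mh_le_left[OF assms] mh_le_right[OF assms] by simp
qed

sublocale height: continuous_interval_pseudometric \<zeta> "dh h"
proof -
  interpret H: snake \<zeta> h "\<lambda>s r. min r (h s)" by (rule snake.intro[OF is_snake_height])
  show "continuous_interval_pseudometric \<zeta> (dh h)"
    by unfold_locales
      (use dh_eq_dhw_height H.dd_refl H.dd_sym H.dd_triangle H.dd_continuous in \<open>simp_all\<close>)
qed

lemma four_point_height: "four_point (qspace \<zeta> (dh h)) (qdist \<zeta> (dh h))"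
proof -
  interpret H: snake \<zeta> h "\<lambda>s r. min r (h s)" by (rule snake.intro[OF is_snake_height])
  show ?thesis by (rule height.four_point_qspace) (use H.dhw_four_point dh_eq_dhw_height in simp)
qed

lemma height_leaf_not_ancestor:
  assumes s: "s \<in> {0..\<zeta>}" and t: "t \<in> {0..\<zeta>}" and anc: "mh h s t = h t"
    and leaf: "is_leaf (qspace \<zeta> (dh h)) (qdist \<zeta> (dh h)) (qroot \<zeta> (dh h)) (qclass \<zeta> (dh h) t)"
  shows "qclass \<zeta> (dh h) t = qclass \<zeta> (dh h) s"
proof -
  have z: "0 \<in> {0..\<zeta>}" using s by simp
  have "dh h 0 t + dh h t s = dh h 0 s"
    using mh_zero[OF s] mh_zero[OF t] anc h_0 mh_commute[of 0] mh_commute[of t s]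
    unfolding dh_def by simp
  then have "qclass \<zeta> (dh h) t = qclass \<zeta> (dh h) 0 \<or> qclass \<zeta> (dh h) t = qclass \<zeta> (dh h) s"
    by (intro height.quotient.four_point_leaf_not_between[OF four_point_height leaf]
        height.qclass_in_qspace z s)
      (simp only: height.qdist_qclass[OF z t] height.qdist_qclass[OF t s] height.qdist_qclass[OF z s])
  then show ?thesis using leaf unfolding is_leaf_def qroot_def by simp
qed

section \<open>Leaves of the snake tree\<close>

lemma Uhw_tail_min_lt_tip:
  assumes s: "s \<in> Uhw \<zeta> h w" and m: "0 \<le> m" "m < h s"
  shows "tail_min s m < w s (h s)"
proof -
  have sS: "s \<in> {0..\<zeta>}"
    and U: "\<And>e. e \<in> {0<..<h s} \<Longrightarrow> Inf (w s ` {h s - e..h s}) < w s (h s)"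
    using s unfolding Uhw_def by auto
  define e where "e = (h s - m) / 2"
  have "2 * e = h s - m" unfolding e_def by simp
  then have e: "e \<in> {0<..<h s}" "m \<le> h s - e" using m by auto
  have "tail_min s m \<le> Inf (w s ` {h s - e..h s})"
    using e tail_min_le[OF sS m(1)] by (intro Inf_image_Icc_ge) auto
  then show ?thesis using U[OF e(1)] by simp
qed

lemma dhw_eq_0_imp_ancestor:
  assumes s: "s \<in> {0..\<zeta>}" and t: "t \<in> Uhw \<zeta> h w" and d: "dhw h w s t = 0"
  shows "mh h s t = h t"
proof (rule ccontr)
  assume "mh h s t \<noteq> h t"
  moreover have tS: "t \<in> {0..\<zeta>}" using t unfolding Uhw_def by auto
  ultimately have "geodesic_min s t < w t (h t)"
    using geodesic_min_le_right[of s t] Uhw_tail_min_lt_tip[OF t, of "mh h s t"]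
      mh_nonneg[OF s tS] mh_le_right[OF s tS] by fastforce
  then show False
    using d geodesic_min_le_tip[OF s tS] unfolding dhw_eq by linarith
qed

lemma dhw_eq_0_if_same_height_ancestor:
  assumes s: "s \<in> {0..\<zeta>}" and t: "t \<in> {0..\<zeta>}" and "mh h s t = h t" "h s = h t"
  shows "dhw h w s t = 0"
proof -
  have "w s (h s) = w t (h t)" using w_agree[OF s t, of "h t"] assms h_nonneg[OF t] by simp
  then show ?thesis
    unfolding dhw_eq geodesic_min_def using assms tail_min_top[of s] tail_min_top[of t] by simp
qed

lemma geodesic_min_zero: "s \<in> {0..\<zeta>} \<Longrightarrow> geodesic_min s 0 = tail_min s 0"
  using w_agree[of s 0 0] mh_nonneg[of s 0] tail_min_le[of s 0 0] tail_min_top[of 0] h_0 h_nonneg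
  unfolding geodesic_min_def by (simp add: mh_zero)

lemma qclass_Uhw_ne_root:
  assumes s: "s \<in> Uhw \<zeta> h w"
  shows "qclass \<zeta> (dhw h w) s \<noteq> qroot \<zeta> (dhw h w)"
proof -
  have sS: "s \<in> {0..\<zeta>}" and "0 < h s" using s unfolding Uhw_def by auto
  then have "tail_min s 0 < w s (h s)" using Uhw_tail_min_lt_tip[OF s] by simp
  moreover have "tail_min s 0 \<le> w 0 0"
    using tail_min_le[OF sS, of 0 0] h_nonneg[OF sS] w_agree[of s 0 0] mh_nonneg[of s 0] sS by simp
  ultimately have "dhw h w s 0 > 0" unfolding dhw_eq geodesic_min_zero[OF sS] using h_0 by simp
  then show ?thesis unfolding qroot_def using qclass_eq_iff[OF sS, of 0] sS by simp
qed

text \<open>If \<open>s\<close> lay between \<open>t\<close> and the root of the snake tree, the minimum of the labels between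
  \<open>t\<close> and \<open>s\<close> would be the tip label of \<open>s\<close>, making \<open>s\<close> an ancestor of \<open>t\<close> in the tree coded
  by \<open>h\<close>; for a leaf this forces \<open>t\<close> and \<open>s\<close> to be identified in both trees.\<close>
lemma Uhw_not_between_root:
  assumes s: "s \<in> Uhw \<zeta> h w" and t: "t \<in> {0..\<zeta>}"
    and leaf: "is_leaf (qspace \<zeta> (dh h)) (qdist \<zeta> (dh h)) (qroot \<zeta> (dh h)) (qclass \<zeta> (dh h) s)"
    and between: "dhw h w t s + dhw h w s 0 = dhw h w t 0"
  shows "qclass \<zeta> (dhw h w) t = qclass \<zeta> (dhw h w) s"
proof -
  have sS: "s \<in> {0..\<zeta>}" and z: "0 \<in> {0..\<zeta>}" using s t unfolding Uhw_def by auto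
  let ?a = "geodesic_min t s" and ?Is = "tail_min s 0" and ?It = "tail_min t 0"
  have E: "w s (h s) + ?It = ?a + ?Is"
    using between unfolding dhw_eq geodesic_min_zero[OF sS] geodesic_min_zero[OF t] by simp
  have "min ?It ?Is \<le> ?a" "min ?a ?Is \<le> ?It"
    using geodesic_min_ultra[OF t sS z] geodesic_min_ultra[OF t z sS] geodesic_min_zero[OF t]
      geodesic_min_zero[OF sS] geodesic_min_commute[of 0 s] by simp_all
  moreover have "?a \<le> w s (h s)" using geodesic_min_le_tip[OF sS t] geodesic_min_commute[of t s] by simp
  moreover have "?Is < w s (h s)" using Uhw_tail_min_lt_tip[OF s, of 0] s unfolding Uhw_def by simp
  ultimately have "?a = w s (h s)" using E by (auto simp: min_def split: if_splits)
  then have "w s (h s) \<le> tail_min s (mh h t s)" using geodesic_min_le_right[of t s] by simp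
  then have anc: "mh h t s = h s"
    using Uhw_tail_min_lt_tip[OF s, of "mh h t s"] mh_nonneg[OF t sS] mh_le_right[OF t sS] by fastforce
  then have "qclass \<zeta> (dh h) s = qclass \<zeta> (dh h) t"
    by (rule height_leaf_not_ancestor[OF t sS _ leaf])
  then have "h t = h s" using anc height.qclass_eq_iff[OF sS t] mh_commute[of s t] unfolding dh_def by simp
  then have "dhw h w t s = 0" using dhw_eq_0_if_same_height_ancestor[OF t sS anc] by simp
  then show ?thesis using qclass_eq_iff[OF t sS] by simp
qed

lemma is_leaf_snake:
  assumes s: "s \<in> Uhw \<zeta> h w"
    and leaf: "is_leaf (qspace \<zeta> (dh h)) (qdist \<zeta> (dh h)) (qroot \<zeta> (dh h)) (qclass \<zeta> (dh h) s)"
  shows "is_leaf (qspace \<zeta> (dhw h w)) (qdist \<zeta> (dhw h w)) (qroot \<zeta> (dhw h w)) (qclass \<zeta> (dhw h w) s)"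
proof (rule quotient.real_tree_leafI[OF real_tree_snake])
  have sS: "s \<in> {0..\<zeta>}" and z: "0 \<in> {0..\<zeta>}" using s unfolding Uhw_def by auto
  show "qroot \<zeta> (dhw h w) \<in> qspace \<zeta> (dhw h w)" "qclass \<zeta> (dhw h w) s \<in> qspace \<zeta> (dhw h w)"
    unfolding qroot_def using qclass_in_qspace z sS by auto
  show "qclass \<zeta> (dhw h w) s \<noteq> qroot \<zeta> (dhw h w)" by (rule qclass_Uhw_ne_root[OF s])
  fix y assume y: "y \<in> qspace \<zeta> (dhw h w)" "y \<noteq> qclass \<zeta> (dhw h w) s"
  then obtain t where t: "t \<in> {0..\<zeta>}" "y = qclass \<zeta> (dhw h w) t" by (elim qspaceE)
  then show "qdist \<zeta> (dhw h w) y (qclass \<zeta> (dhw h w) s) +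
      qdist \<zeta> (dhw h w) (qclass \<zeta> (dhw h w) s) (qroot \<zeta> (dhw h w)) \<noteq>
      qdist \<zeta> (dhw h w) y (qroot \<zeta> (dhw h w))"
    using Uhw_not_between_root[OF s t(1) leaf] y(2)
    unfolding t(2) qroot_def qdist_qclass[OF t(1) sS] qdist_qclass[OF sS z] qdist_qclass[OF t(1) z] by auto
qed

lemma AE_is_leaf_snake:
  assumes "AE t in lebesgue_on {0..\<zeta>}.
    t \<in> Uhw \<zeta> h w \<and> is_leaf (qspace \<zeta> (dh h)) (qdist \<zeta> (dh h)) (qroot \<zeta> (dh h)) (qclass \<zeta> (dh h) t)"
  shows "AE x in qmeasure \<zeta> (dhw h w). is_leaf (qspace \<zeta> (dhw h w)) (qdist \<zeta> (dhw h w)) (qroot \<zeta> (dhw h w)) x"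
  unfolding AE_qmeasure_iff using assms by eventually_elim (auto intro: is_leaf_snake)

lemma qmeasure_snake_singleton:
  assumes ae: "AE t in lebesgue_on {0..\<zeta>}.
    t \<in> Uhw \<zeta> h w \<and> is_leaf (qspace \<zeta> (dh h)) (qdist \<zeta> (dh h)) (qroot \<zeta> (dh h)) (qclass \<zeta> (dh h) t)"
    and atoms: "\<And>x. x \<in> qspace \<zeta> (dh h) \<Longrightarrow> emeasure (qmeasure \<zeta> (dh h)) {x} = 0"
    and x: "x \<in> qspace \<zeta> (dhw h w)"
  shows "emeasure (qmeasure \<zeta> (dhw h w)) {x} = 0"
proof -
  obtain s where s: "s \<in> {0..\<zeta>}" "x = qclass \<zeta> (dhw h w) s" using x by (rule qspaceE)
  have "AE t in lebesgue_on {0..\<zeta>}. qclass \<zeta> (dh h) t \<noteq> qclass \<zeta> (dh h) s"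
    using atoms height.qmeasure_singleton_eq_0_iff height.qclass_in_qspace[OF s(1)] by blast
  with ae have "AE t in lebesgue_on {0..\<zeta>}. qclass \<zeta> (dhw h w) t \<noteq> x"
  proof eventually_elim
    case (elim t)
    then have tS: "t \<in> {0..\<zeta>}" unfolding Uhw_def by auto
    show ?case
    proof
      assume "qclass \<zeta> (dhw h w) t = x"
      then have "mh h s t = h t"
        using dhw_eq_0_imp_ancestor[of s t] elim s qclass_eq_iff[OF s(1) tS] by simp
      then show False using height_leaf_not_ancestor[OF s(1) tS] elim by blast
    qed
  qed
  then show ?thesis using qmeasure_singleton_eq_0_iff[OF x] by simp
qed

end

theorem lemma4p26:
  fixes \<zeta> :: real and h :: "real \<Rightarrow> real" and w :: "real \<Rightarrow> real \<Rightarrow> real"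
  assumes "\<zeta> > 0"
    and "is_snake \<zeta> h w"
    and "{0..\<zeta>} - Uhw \<zeta> h w \<in> null_sets lebesgue"
    and "continuum_real_tree (qspace \<zeta> (dh h)) (qdist \<zeta> (dh h)) (qroot \<zeta> (dh h)) (qmeasure \<zeta> (dh h))"
  shows "continuum_real_tree (qspace \<zeta> (dhw h w)) (qdist \<zeta> (dhw h w)) (qroot \<zeta> (dhw h w)) (qmeasure \<zeta> (dhw h w))"
proof -
  interpret snake \<zeta> h w by (rule snake.intro) fact
  note height_tree = assms(4)[unfolded continuum_real_tree_def]
  have "AE t in lebesgue_on {0..\<zeta>}. t \<in> Uhw \<zeta> h w"
    using assms(3) by (subst AE_restrict_space_iff) (auto intro: AE_I')
  moreover have "AE t in lebesgue_on {0..\<zeta>}.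
      is_leaf (qspace \<zeta> (dh h)) (qdist \<zeta> (dh h)) (qroot \<zeta> (dh h)) (qclass \<zeta> (dh h) t)"
    using height_tree height.AE_qmeasure_iff by blast
  ultimately have ae: "AE t in lebesgue_on {0..\<zeta>}.
      t \<in> Uhw \<zeta> h w \<and> is_leaf (qspace \<zeta> (dh h)) (qdist \<zeta> (dh h)) (qroot \<zeta> (dh h)) (qclass \<zeta> (dh h) t)"
    by eventually_elim simp
  show ?thesis
    unfolding continuum_real_tree_def
    using real_tree_snake compact_space_qspace qclass_in_qspace[of 0] assms(1) space_qmeasure
      sets_qmeasure finite_measure_qmeasure msupport_qmeasure[OF assms(1)] AE_is_leaf_snake[OF ae]
      qmeasure_snake_singleton[OF ae] height_tree
    by (simp add: qroot_def)
qed

end
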